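(* Let $\Delta\subset{\mathbb RP}^2$ be the interior of a triangle with its Hilbert metric $d_\Delta(b,c)=|\log cr(a,b,c,d)|$, and let $T$ be an ideal triangle in $\Delta$ with shape parameter $t>0$. Then the Hilbert area of $T$ is $$B(t)=\int_1^\infty\frac1s\log\left(\frac{(st+1)(s+t)}{t(s-1)^2}\right)ds.$$
   Context: Hilbert metric on a properly convex open set $\Omega$: for $b,c\in\Omega$ let the projective line through them meet $\partial\Omega$ at $a,d$ with $a,b,c,d$ in order; $d_\Omega(b,c)=|\log cr(a,b,c,d)|$ with $cr(y_1,y_2,y_3,y_4)=\frac{(y_1-y_3)(y_2-y_4)}{(y_1-y_2)(y_3-y_4)}$. Hilbert area is the p-area of this Finsler metric: on each tangent space it is the multiple of Lebesgue measure for which the supremum of areas of parallelograms spanned by two vectors of norm $\le1$ is $1$. Write $\Delta=\{[x_0v_0+x_1v_1+x_2v_2]:x_i>0\}$. An ideal triangle in $\Delta$ is the intersection with $\Delta$ of a triangle whose vertices lie in the interiors of the three sides of $\overline\Delta$, one on each side; its vertices can be written $[v_0+av_1],[v_1+bv_2],[v_2+cv_0]$ with $a,b,c>0$, and its shape parameter is $t=abc$ (depending only on the cyclic ordering of vertices; reversing it replaces $t$ by $1/t$). *)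

theory Defs
  imports "HOL-Analysis.Analysis"
begin

text \<open>We work in an affine chart of RP^2 identified with real \<times> real, chosen so
that it contains the closure of the triangle.  A point [x0 v0 + x1 v1 + x2 v2]
with v_i = (P_i, 1) corresponds to the chart point
(x0 P0 + x1 P1 + x2 P2)/(x0+x1+x2).\<close>

definition cr :: "real \<Rightarrow> real \<Rightarrow> real \<Rightarrow> real \<Rightarrow> real" where
  "cr y1 y2 y3 y4 = ((y1 - y3) * (y2 - y4)) / ((y1 - y2) * (y3 - y4))"

text \<open>For b \<noteq> c the line through b and c is parametrised
by s \<mapsto> b + s (c - b); it leaves Omega at parameter s_plus > 1 (point d) and at
parameter -s_minus < 0 (point a), so a, b, c, d have parameters
-s_minus, 0, 1, s_plus (cross-ratio is invariant under affine reparametrisation).\<close>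

definition hilbert_dist :: "(real \<times> real) set \<Rightarrow> real \<times> real \<Rightarrow> real \<times> real \<Rightarrow> real" where
  "hilbert_dist \<Omega> b c =
     (if b = c then 0 else
      (let sp = Sup {s. s \<ge> 0 \<and> b + s *\<^sub>R (c - b) \<in> \<Omega>};
           sm = Sup {s. s \<ge> 0 \<and> b - s *\<^sub>R (c - b) \<in> \<Omega>}
       in \<bar>ln (cr (- sm) 0 1 sp)\<bar>))"

definition hilbert_norm :: "(real \<times> real) set \<Rightarrow> real \<times> real \<Rightarrow> real \<times> real \<Rightarrow> real" where
  "hilbert_norm \<Omega> p v = Lim (at_right 0) (\<lambda>h. hilbert_dist \<Omega> p (p + h *\<^sub>R v) / h)"

text \<open>p-area density: the multiple of Lebesgue measure for which the supremum of
the areas of parallelograms spanned by two vectors of norm \<le> 1 equals 1.\<close>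

definition hilbert_area_density :: "(real \<times> real) set \<Rightarrow> real \<times> real \<Rightarrow> real" where
  "hilbert_area_density \<Omega> p =
     1 / (SUP uw \<in> {(u, w). hilbert_norm \<Omega> p u \<le> 1 \<and> hilbert_norm \<Omega> p w \<le> 1}.
            \<bar>fst (fst uw) * snd (snd uw) - snd (fst uw) * fst (snd uw)\<bar>)"

definition open_tri :: "real \<times> real \<Rightarrow> real \<times> real \<Rightarrow> real \<times> real \<Rightarrow> (real \<times> real) set" where
  "open_tri P0 P1 P2 = {x0 *\<^sub>R P0 + x1 *\<^sub>R P1 + x2 *\<^sub>R P2 | x0 x1 x2.
      x0 > 0 \<and> x1 > 0 \<and> x2 > 0 \<and> x0 + x1 + x2 = 1}"

text \<open>Ideal triangle with vertices [v0 + a v1], [v1 + b v2], [v2 + c v0].\<close>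

definition ideal_tri :: "real \<times> real \<Rightarrow> real \<times> real \<Rightarrow> real \<times> real \<Rightarrow> real \<Rightarrow> real \<Rightarrow> real
    \<Rightarrow> (real \<times> real) set" where
  "ideal_tri P0 P1 P2 a b c =
     open_tri P0 P1 P2 \<inter>
     convex hull {(1 / (1 + a)) *\<^sub>R (P0 + a *\<^sub>R P1),
                  (1 / (1 + b)) *\<^sub>R (P1 + b *\<^sub>R P2),
                  (1 / (1 + c)) *\<^sub>R (P2 + c *\<^sub>R P0)}"

definition B_integrand :: "real \<Rightarrow> real \<Rightarrow> real" where
  "B_integrand t s = (1 / s) * ln (((s * t + 1) * (s + t)) / (t * (s - 1)^2))"

definition B :: "real \<Rightarrow> real" where
  "B t = integral {1<..} (B_integrand t)"

end

theory Submission
  imports Defs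
begin

text \<open>In barycentric coordinates \<open>(x0, x1, x2)\<close> of the triangle, the line through X in
  direction v leaves the triangle where the first coordinate \<open>x_i + h v_i\<close> vanishes, so the
  Hilbert norm of v at X is \<open>max_i (v_i / x_i) - min_i (v_i / x_i)\<close>. Its unit ball is a hexagon,
  and the largest parallelogram spanned by two unit vectors has area \<open>|D| x0 x1 x2\<close>, where D
  is the determinant of the triangle; so the area density is \<open>1 / (|D| x0 x1 x2)\<close>, and the area of
  the ideal triangle is the integral of \<open>1/(x0 x1 x2)\<close> over the region cut out by three linear
  inequalities. Shearing \<open>x1 = (1 - x0) w\<close>, the inner integral over x0 of \<open>1/(x0 (1 - x0))\<close> is
  a difference of logits, and the remaining integral over w splits at the corner
  \<open>w = 1/(1+b)\<close> into two pieces which the substitutions \<open>w = s/(s+b)\<close> and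
  \<open>1 - w = s/(s + 1/b)\<close> turn into the two halves of the logarithm in \<open>B_integrand\<close>.
  The integral defining B converges since the integrand is \<open>O((s-1)^(-1/2))\<close> near 1 and
  \<open>O(s^(-2))\<close> at infinity.\<close>

lemma LIMSEQ_mult_indicator_incseq:
  fixes c :: ennreal
  assumes "incseq A"
  shows "(\<lambda>n. c * indicator (A n) x) \<longlonglongrightarrow> c * indicator (\<Union>n. A n) x"
proof (cases "\<exists>i. x \<in> A i")
  case True
  then obtain i where "x \<in> A i" by blast
  then have "\<forall>n\<ge>i. c * indicator (A n) x = c * indicator (\<Union>n. A n) x"
    using incseqD[OF assms] by (auto simp: indicator_def)
  then show ?thesis by (intro tendsto_eventually eventually_sequentiallyI) blast
next
  case False
  then show ?thesis by (simp add: indicator_def)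
qed

lemma nn_integral_incseq_indicator_LIMSEQ:
  fixes f :: "real \<Rightarrow> ennreal"
  assumes [measurable]: "f \<in> borel_measurable borel" "\<And>n. A n \<in> sets borel"
    and "incseq A"
  shows "(\<lambda>n. \<integral>\<^sup>+x. f x * indicator (A n) x \<partial>lborel) \<longlonglongrightarrow> (\<integral>\<^sup>+x. f x * indicator (\<Union>n. A n) x \<partial>lborel)"
proof (rule nn_integral_LIMSEQ)
  show "incseq (\<lambda>n x. f x * indicator (A n) x)"
    using incseqD[OF \<open>incseq A\<close>]
    by (auto simp: incseq_def le_fun_def intro!: mult_left_mono split: split_indicator)
qed (auto intro: LIMSEQ_mult_indicator_incseq[OF \<open>incseq A\<close>])

lemma nn_integral_substitution_exhaustion:
  fixes f :: "real \<Rightarrow> ennreal" and g g' :: "real \<Rightarrow> real" and l u :: "nat \<Rightarrow> real"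
  assumes f[measurable]: "f \<in> borel_measurable borel"
    and [measurable]: "g \<in> borel_measurable borel" "g' \<in> borel_measurable borel"
    and deriv: "\<And>x. x \<in> I \<Longrightarrow> (g has_real_derivative g' x) (at x)"
    and cont: "continuous_on I g'" and nonneg: "\<And>x. x \<in> I \<Longrightarrow> 0 \<le> g' x"
    and lu: "\<And>n. l n < u n" "\<And>n. {l n..u n} \<subseteq> I"
    and inc: "incseq (\<lambda>n. {l n..u n})" "incseq (\<lambda>n. {g (l n)..g (u n)})"
    and I: "(\<Union>n. {l n..u n}) = I" and J: "(\<Union>n. {g (l n)..g (u n)}) = J"
  shows "(\<integral>\<^sup>+x. f x * indicator J x \<partial>lborel) = (\<integral>\<^sup>+x. f (g x) * ennreal (g' x) * indicator I x \<partial>lborel)"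
proof (rule LIMSEQ_unique)
  show "(\<lambda>n. \<integral>\<^sup>+x. f x * indicator {g (l n)..g (u n)} x \<partial>lborel) \<longlonglongrightarrow> (\<integral>\<^sup>+x. f x * indicator J x \<partial>lborel)"
    using nn_integral_incseq_indicator_LIMSEQ[OF f _ inc(2)] J by simp
  have "(\<lambda>n. \<integral>\<^sup>+x. f (g x) * ennreal (g' x) * indicator {l n..u n} x \<partial>lborel)
      \<longlonglongrightarrow> (\<integral>\<^sup>+x. f (g x) * ennreal (g' x) * indicator I x \<partial>lborel)"
    using nn_integral_incseq_indicator_LIMSEQ[OF _ _ inc(1)] I by simp
  moreover have "(\<integral>\<^sup>+x. f x * indicator {g (l n)..g (u n)} x \<partial>lborel)
      = (\<integral>\<^sup>+x. f (g x) * ennreal (g' x) * indicator {l n..u n} x \<partial>lborel)" for n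
    using lu(2)[of n] by (intro nn_integral_substitution_aux[OF f _ deriv _ nonneg lu(1)])
      (auto intro: continuous_on_subset[OF cont])
  ultimately show "(\<lambda>n. \<integral>\<^sup>+x. f x * indicator {g (l n)..g (u n)} x \<partial>lborel)
      \<longlonglongrightarrow> (\<integral>\<^sup>+x. f (g x) * ennreal (g' x) * indicator I x \<partial>lborel)"
    by simp
qed

lemma has_integral_if_nn_integral_eq:
  fixes f :: "'a::euclidean_space \<Rightarrow> real"
  assumes "(\<lambda>x. f x * indicator S x) \<in> borel_measurable borel" "\<And>x. x \<in> S \<Longrightarrow> 0 \<le> f x"
    and "(\<integral>\<^sup>+x. ennreal (f x) * indicator S x \<partial>lborel) = ennreal r" "0 \<le> r"
  shows "(f has_integral r) S"
proof -
  have "ennreal (f x) * indicator S x = ennreal (f x * indicator S x)" for x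
    by (simp add: indicator_def)
  then have "((\<lambda>x. f x * indicator S x) has_integral r) UNIV"
    using assms by (intro nn_integral_has_integral) (auto simp: indicator_def)
  then show ?thesis
    by (simp add: indicator_times_eq_if has_integral_restrict_UNIV)
qed

section \<open>Determinants in the plane\<close>

definition det2 :: "real \<times> real \<Rightarrow> real \<times> real \<Rightarrow> real" where
  "det2 u w = fst u * snd w - snd u * fst w"

lemma det2_add_left: "det2 (u + v) w = det2 u w + det2 v w"
  and det2_add_right: "det2 u (v + w) = det2 u v + det2 u w"
  and det2_scale_left: "det2 (c *\<^sub>R u) w = c * det2 u w"
  and det2_scale_right: "det2 u (c *\<^sub>R w) = c * det2 u w"
  and det2_self: "det2 u u = 0"
  and det2_swap: "det2 w u = - det2 u w"
  by (simp_all add: det2_def algebra_simps)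

lemmas det2_bilinear = det2_add_left det2_add_right det2_scale_left det2_scale_right

lemma det2_cramer:
  assumes "det2 e f \<noteq> 0"
  shows "v = (det2 v f / det2 e f) *\<^sub>R e + (det2 e v / det2 e f) *\<^sub>R f"
proof -
  have "det2 v f * fst e + det2 e v * fst f = fst v * det2 e f"
    "det2 v f * snd e + det2 e v * snd f = snd v * det2 e f"
    by (simp_all add: det2_def algebra_simps)
  then show ?thesis
    using assms by (simp add: prod_eq_iff field_simps)
qed

lemma det2_nonzero_if_not_collinear:
  assumes "\<not> collinear {P0, P1, P2 :: real \<times> real}"
  shows "det2 (P0 - P2) (P1 - P2) \<noteq> 0"
proof
  assume "det2 (P0 - P2) (P1 - P2) = 0"
  then have D: "fst (P0 - P2) * snd (P1 - P2) = snd (P0 - P2) * fst (P1 - P2)"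
    by (simp add: det2_def)
  have "P0 - P2 = 0 \<or> (\<exists>c. P1 - P2 = c *\<^sub>R (P0 - P2))"
  proof (cases "fst (P0 - P2) = 0")
    case True
    then show ?thesis
      using D by (cases "snd (P0 - P2) = 0")
        (auto simp: prod_eq_iff intro!: exI[of _ "snd (P1 - P2) / snd (P0 - P2)"])
  next
    case False
    then show ?thesis
      using D by (auto simp: prod_eq_iff field_simps intro!: exI[of _ "fst (P1 - P2) / fst (P0 - P2)"])
  qed
  then have "collinear {0, P0 - P2, P1 - P2}" by (auto simp: collinear_lemma)
  then have "collinear {P0, P2, P1}" by (subst collinear_3) simp
  then show False using assms by (simp add: insert_commute)
qed

lemma nn_integral_lborel_affine_basis_fst_nonzero:
  fixes K :: "real \<times> real \<Rightarrow> ennreal" and e f p :: "real \<times> real"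
  assumes K[measurable]: "K \<in> borel_measurable borel"
    and D: "det2 e f \<noteq> 0" and e1: "fst e \<noteq> 0"
  shows "(\<integral>\<^sup>+X. K X \<partial>lborel)
       = ennreal \<bar>det2 e f\<bar> * (\<integral>\<^sup>+x0. (\<integral>\<^sup>+x1. K (p + x0 *\<^sub>R e + x1 *\<^sub>R f) \<partial>lborel) \<partial>lborel)"
proof -
  define k where "k = det2 e f / fst e"
  have k: "k \<noteq> 0" using D e1 by (simp add: k_def)
  define y where "y u = snd p + (snd e / fst e) * (u - fst p)" for u
  define x where "x x1 = fst p + x1 * fst f" for x1
  have basis: "p + x0 *\<^sub>R e + x1 *\<^sub>R f = (x x1 + fst e * x0, y (x x1 + fst e * x0) + k * x1)" for x0 x1
    using e1 by (simp add: prod_eq_iff x_def y_def k_def det2_def field_simps)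
  have "(\<integral>\<^sup>+X. K X \<partial>lborel) = (\<integral>\<^sup>+u. (\<integral>\<^sup>+v. K (u, v) \<partial>lborel) \<partial>lborel)"
    unfolding lborel_prod[symmetric] by (rule lborel.nn_integral_fst[symmetric]) (simp add: lborel_prod)
  also have "\<dots> = (\<integral>\<^sup>+u. ennreal \<bar>k\<bar> * (\<integral>\<^sup>+x1. K (u, y u + k * x1) \<partial>lborel) \<partial>lborel)"
    by (intro nn_integral_cong nn_integral_real_affine k) measurable
  also have "\<dots> = ennreal \<bar>k\<bar> * (\<integral>\<^sup>+x1. (\<integral>\<^sup>+u. K (u, y u + k * x1) \<partial>lborel) \<partial>lborel)"
    by (subst lborel_pair.Fubini', unfold y_def, measurable) (rule nn_integral_cmult, measurable)
  also have "(\<integral>\<^sup>+x1. (\<integral>\<^sup>+u. K (u, y u + k * x1) \<partial>lborel) \<partial>lborel)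
      = (\<integral>\<^sup>+x1. ennreal \<bar>fst e\<bar> * (\<integral>\<^sup>+x0. K (p + x0 *\<^sub>R e + x1 *\<^sub>R f) \<partial>lborel) \<partial>lborel)"
    unfolding basis by (intro nn_integral_cong nn_integral_real_affine e1) (unfold y_def, measurable)
  also have "\<dots> = ennreal \<bar>fst e\<bar> * (\<integral>\<^sup>+x0. (\<integral>\<^sup>+x1. K (p + x0 *\<^sub>R e + x1 *\<^sub>R f) \<partial>lborel) \<partial>lborel)"
  proof -
    have "(\<integral>\<^sup>+x1. (\<integral>\<^sup>+x0. K (p + x0 *\<^sub>R e + x1 *\<^sub>R f) \<partial>lborel) \<partial>lborel)
        = (\<integral>\<^sup>+x0. (\<integral>\<^sup>+x1. K (p + x0 *\<^sub>R e + x1 *\<^sub>R f) \<partial>lborel) \<partial>lborel)"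
      by (rule lborel_pair.Fubini') measurable
    moreover have "(\<lambda>x1. \<integral>\<^sup>+x0. K (p + x0 *\<^sub>R e + x1 *\<^sub>R f) \<partial>lborel) \<in> borel_measurable lborel"
      by measurable
    ultimately show ?thesis by (simp add: nn_integral_cmult)
  qed
  also have "ennreal \<bar>k\<bar> * (ennreal \<bar>fst e\<bar> * Q) = ennreal \<bar>det2 e f\<bar> * Q" for Q
    using e1 by (simp add: k_def abs_divide mult.assoc[symmetric] ennreal_mult[symmetric])
  finally show ?thesis .
qed

lemma nn_integral_lborel_affine_basis:
  fixes K :: "real \<times> real \<Rightarrow> ennreal" and e f p :: "real \<times> real"
  assumes K[measurable]: "K \<in> borel_measurable borel" and D: "det2 e f \<noteq> 0"
  shows "(\<integral>\<^sup>+X. K X \<partial>lborel)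
       = ennreal \<bar>det2 e f\<bar> * (\<integral>\<^sup>+x0. (\<integral>\<^sup>+x1. K (p + x0 *\<^sub>R e + x1 *\<^sub>R f) \<partial>lborel) \<partial>lborel)"
proof (cases "fst e = 0")
  case False
  then show ?thesis using nn_integral_lborel_affine_basis_fst_nonzero[OF K D] by blast
next
  case True
  then have "fst f \<noteq> 0" using D by (auto simp: det2_def)
  moreover have "det2 f e \<noteq> 0" "\<bar>det2 f e\<bar> = \<bar>det2 e f\<bar>" using D by (auto simp: det2_swap[of e f])
  ultimately have "(\<integral>\<^sup>+X. K X \<partial>lborel)
      = ennreal \<bar>det2 e f\<bar> * (\<integral>\<^sup>+x1. (\<integral>\<^sup>+x0. K (p + x1 *\<^sub>R f + x0 *\<^sub>R e) \<partial>lborel) \<partial>lborel)"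
    using nn_integral_lborel_affine_basis_fst_nonzero[OF K] by metis
  also have "(\<integral>\<^sup>+x1. (\<integral>\<^sup>+x0. K (p + x1 *\<^sub>R f + x0 *\<^sub>R e) \<partial>lborel) \<partial>lborel)
      = (\<integral>\<^sup>+x0. (\<integral>\<^sup>+x1. K (p + x0 *\<^sub>R e + x1 *\<^sub>R f) \<partial>lborel) \<partial>lborel)"
    by (subst lborel_pair.Fubini') (measurable, simp add: add_ac)
  finally show ?thesis .
qed

section \<open>Barycentric coordinates\<close>

locale triangle =
  fixes P0 P1 P2 :: "real \<times> real"
  assumes det_nonzero: "det2 (P0 - P2) (P1 - P2) \<noteq> 0"
begin

abbreviation "e \<equiv> P0 - P2"
abbreviation "f \<equiv> P1 - P2"
abbreviation "D \<equiv> det2 (P0 - P2) (P1 - P2)"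

text \<open>\<open>bary_i\<close> are the barycentric coordinates of points, \<open>dbary_i\<close> their linear parts, i.e. the
  barycentric components of vectors (which sum to 0 rather than 1).\<close>

definition bary0 :: "real \<times> real \<Rightarrow> real" where "bary0 X = det2 (X - P2) f / D"
definition bary1 :: "real \<times> real \<Rightarrow> real" where "bary1 X = det2 e (X - P2) / D"
definition bary2 :: "real \<times> real \<Rightarrow> real" where "bary2 X = 1 - bary0 X - bary1 X"
definition dbary0 :: "real \<times> real \<Rightarrow> real" where "dbary0 v = det2 v f / D"
definition dbary1 :: "real \<times> real \<Rightarrow> real" where "dbary1 v = det2 e v / D"
definition dbary2 :: "real \<times> real \<Rightarrow> real" where "dbary2 v = - dbary0 v - dbary1 v"

lemma dbary_decomp: "v = dbary0 v *\<^sub>R e + dbary1 v *\<^sub>R f"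
  unfolding dbary0_def dbary1_def by (rule det2_cramer[OF det_nonzero])

lemma dbary_basis: "dbary0 (x *\<^sub>R e + y *\<^sub>R f) = x" "dbary1 (x *\<^sub>R e + y *\<^sub>R f) = y"
  using det_nonzero by (simp_all add: dbary0_def dbary1_def det2_bilinear det2_self det2_swap[of e f])

lemma bary_affine: "bary0 (P2 + x *\<^sub>R e + y *\<^sub>R f) = x" "bary1 (P2 + x *\<^sub>R e + y *\<^sub>R f) = y"
  using dbary_basis unfolding bary0_def bary1_def dbary0_def dbary1_def by simp_all

lemma bary_decomp: "X = P2 + bary0 X *\<^sub>R e + bary1 X *\<^sub>R f"
  using dbary_decomp[of "X - P2"] unfolding bary0_def bary1_def dbary0_def dbary1_def
  by (simp add: algebra_simps)

lemma affine_combination_eq: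
  "x0 + x1 + x2 = 1 \<Longrightarrow> x0 *\<^sub>R P0 + x1 *\<^sub>R P1 + x2 *\<^sub>R P2 = P2 + x0 *\<^sub>R e + x1 *\<^sub>R f"
  by (simp add: algebra_simps flip: scaleR_add_left)

lemma bary_affine_combination:
  assumes "x0 + x1 + x2 = 1"
  shows "bary0 (x0 *\<^sub>R P0 + x1 *\<^sub>R P1 + x2 *\<^sub>R P2) = x0"
    "bary1 (x0 *\<^sub>R P0 + x1 *\<^sub>R P1 + x2 *\<^sub>R P2) = x1"
    "bary2 (x0 *\<^sub>R P0 + x1 *\<^sub>R P1 + x2 *\<^sub>R P2) = x2"
  using assms by (simp_all add: affine_combination_eq bary_affine bary2_def)

lemma bary_affine_decomp: "X = bary0 X *\<^sub>R P0 + bary1 X *\<^sub>R P1 + bary2 X *\<^sub>R P2"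
  using affine_combination_eq[of "bary0 X" "bary1 X" "bary2 X"] bary_decomp[of X]
  by (simp add: bary2_def)

lemma bary_add:
  "bary0 (X + h *\<^sub>R v) = bary0 X + h * dbary0 v"
  "bary1 (X + h *\<^sub>R v) = bary1 X + h * dbary1 v"
  "bary2 (X + h *\<^sub>R v) = bary2 X + h * dbary2 v"
proof -
  have "X + h *\<^sub>R v - P2 = (X - P2) + h *\<^sub>R v" by simp
  then show "bary0 (X + h *\<^sub>R v) = bary0 X + h * dbary0 v"
    "bary1 (X + h *\<^sub>R v) = bary1 X + h * dbary1 v"
    unfolding bary0_def bary1_def dbary0_def dbary1_def
    by (simp_all only: det2_bilinear add_divide_distrib times_divide_eq_right)
  then show "bary2 (X + h *\<^sub>R v) = bary2 X + h * dbary2 v"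
    unfolding bary2_def dbary2_def by (simp add: algebra_simps)
qed

lemma bary_measurable [measurable]:
  "bary0 \<in> borel_measurable borel" "bary1 \<in> borel_measurable borel"
  unfolding bary0_def bary1_def det2_def using det_nonzero[unfolded det2_def]
  by (intro borel_measurable_continuous_onI continuous_intros; simp)+

lemma open_tri_iff_bary: "X \<in> open_tri P0 P1 P2 \<longleftrightarrow> 0 < bary0 X \<and> 0 < bary1 X \<and> 0 < bary2 X"
proof
  assume "X \<in> open_tri P0 P1 P2"
  then obtain x0 x1 x2 where "X = x0 *\<^sub>R P0 + x1 *\<^sub>R P1 + x2 *\<^sub>R P2"
    and "0 < x0" "0 < x1" "0 < x2" "x0 + x1 + x2 = 1" unfolding open_tri_def by blast
  then show "0 < bary0 X \<and> 0 < bary1 X \<and> 0 < bary2 X" using bary_affine_combination by simp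
next
  assume "0 < bary0 X \<and> 0 < bary1 X \<and> 0 < bary2 X"
  moreover have "bary0 X + bary1 X + bary2 X = 1" by (simp add: bary2_def)
  ultimately show "X \<in> open_tri P0 P1 P2"
    unfolding open_tri_def using bary_affine_decomp by blast
qed

end

text \<open>In barycentric coordinates the ideal triangle is cut out by three linear forms: \<open>side_i\<close>
  vanishes on the side opposite to the i-th vertex in the definition of \<open>ideal_tri\<close>.\<close>

definition side0 :: "real \<Rightarrow> real \<Rightarrow> real \<Rightarrow> real \<Rightarrow> real \<Rightarrow> real \<Rightarrow> real" where
  "side0 a b c x0 x1 x2 = x0 + b*c*x1 - c*x2"
definition side1 :: "real \<Rightarrow> real \<Rightarrow> real \<Rightarrow> real \<Rightarrow> real \<Rightarrow> real \<Rightarrow> real" where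
  "side1 a b c x0 x1 x2 = x1 + a*c*x2 - a*x0"
definition side2 :: "real \<Rightarrow> real \<Rightarrow> real \<Rightarrow> real \<Rightarrow> real \<Rightarrow> real \<Rightarrow> real" where
  "side2 a b c x0 x1 x2 = x2 + a*b*x0 - b*x1"

lemma sides_of_vertex_weights:
  "side0 a b c (p + c*r) (a*p + q) (b*q + r) = (1 + a*b*c) * p"
  "side1 a b c (p + c*r) (a*p + q) (b*q + r) = (1 + a*b*c) * q"
  "side2 a b c (p + c*r) (a*p + q) (b*q + r) = (1 + a*b*c) * r"
  by (simp_all add: side0_def side1_def side2_def algebra_simps)

lemma vertex_weights_of_sides:
  "side0 a b c x0 x1 x2 + c * side2 a b c x0 x1 x2 = (1 + a*b*c) * x0"
  "a * side0 a b c x0 x1 x2 + side1 a b c x0 x1 x2 = (1 + a*b*c) * x1"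
  "b * side1 a b c x0 x1 x2 + side2 a b c x0 x1 x2 = (1 + a*b*c) * x2"
  by (simp_all add: side0_def side1_def side2_def algebra_simps)

context triangle
begin

lemma ideal_vertices_combination:
  fixes a b c p q r :: real
  assumes "a > 0" "b > 0" "c > 0"
  shows "((1+a)*p) *\<^sub>R ((1 / (1 + a)) *\<^sub>R (P0 + a *\<^sub>R P1))
       + ((1+b)*q) *\<^sub>R ((1 / (1 + b)) *\<^sub>R (P1 + b *\<^sub>R P2))
       + ((1+c)*r) *\<^sub>R ((1 / (1 + c)) *\<^sub>R (P2 + c *\<^sub>R P0))
     = (p + c*r) *\<^sub>R P0 + (a*p + q) *\<^sub>R P1 + (b*q + r) *\<^sub>R P2"
proof -
  have h: "(k*x) *\<^sub>R ((1 / k) *\<^sub>R Y) = x *\<^sub>R Y" if "k > 0" for k x and Y :: "real \<times> real"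
    using that by simp
  have pos: "1 + a > 0" "1 + b > 0" "1 + c > 0" using assms by simp_all
  show ?thesis
    by (simp only: h[OF pos(1)] h[OF pos(2)] h[OF pos(3)]) (simp add: algebra_simps)
qed

lemma in_ideal_hull_iff_vertex_weights:
  assumes a: "a > 0" and b: "b > 0" and c: "c > 0"
  shows "X \<in> convex hull {(1 / (1 + a)) *\<^sub>R (P0 + a *\<^sub>R P1), (1 / (1 + b)) *\<^sub>R (P1 + b *\<^sub>R P2),
                  (1 / (1 + c)) *\<^sub>R (P2 + c *\<^sub>R P0)}
     \<longleftrightarrow> (\<exists>p q r. 0 \<le> p \<and> 0 \<le> q \<and> 0 \<le> r \<and> (1+a)*p + (1+b)*q + (1+c)*r = 1
            \<and> X = (p + c*r) *\<^sub>R P0 + (a*p + q) *\<^sub>R P1 + (b*q + r) *\<^sub>R P2)"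
    (is "?in_hull \<longleftrightarrow> ?combination")
proof
  assume ?in_hull
  then obtain u v w where "0 \<le> u" "0 \<le> v" "0 \<le> w" "u + v + w = 1"
    and "X = u *\<^sub>R ((1 / (1 + a)) *\<^sub>R (P0 + a *\<^sub>R P1)) + v *\<^sub>R ((1 / (1 + b)) *\<^sub>R (P1 + b *\<^sub>R P2))
       + w *\<^sub>R ((1 / (1 + c)) *\<^sub>R (P2 + c *\<^sub>R P0))"
    unfolding convex_hull_3 by blast
  then show ?combination
    using a b c ideal_vertices_combination[OF a b c, of "u/(1+a)" "v/(1+b)" "w/(1+c)"]
    by (intro exI[of _ "u/(1+a)"] exI[of _ "v/(1+b)"] exI[of _ "w/(1+c)"]) auto
next
  assume ?combination
  then obtain p q r where "0 \<le> p" "0 \<le> q" "0 \<le> r" "(1+a)*p + (1+b)*q + (1+c)*r = 1"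
    and "X = (p + c*r) *\<^sub>R P0 + (a*p + q) *\<^sub>R P1 + (b*q + r) *\<^sub>R P2" by blast
  then show ?in_hull
    using a b c ideal_vertices_combination[OF a b c, of p q r] unfolding convex_hull_3
    by (intro CollectI exI[of _ "(1+a)*p"] exI[of _ "(1+b)*q"] exI[of _ "(1+c)*r"]) auto
qed

lemma in_ideal_hull_iff_sides_nonneg:
  assumes a: "a > 0" and b: "b > 0" and c: "c > 0"
  shows "X \<in> convex hull {(1 / (1 + a)) *\<^sub>R (P0 + a *\<^sub>R P1), (1 / (1 + b)) *\<^sub>R (P1 + b *\<^sub>R P2),
                  (1 / (1 + c)) *\<^sub>R (P2 + c *\<^sub>R P0)}
    \<longleftrightarrow> 0 \<le> side0 a b c (bary0 X) (bary1 X) (bary2 X) \<and> 0 \<le> side1 a b c (bary0 X) (bary1 X) (bary2 X)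
      \<and> 0 \<le> side2 a b c (bary0 X) (bary1 X) (bary2 X)"
    (is "_ \<longleftrightarrow> ?sides")
proof -
  have t: "1 + a*b*c > 0" using a b c by (simp add: add_pos_pos)
  show ?thesis unfolding in_ideal_hull_iff_vertex_weights[OF a b c]
  proof
    assume "\<exists>p q r. 0 \<le> p \<and> 0 \<le> q \<and> 0 \<le> r \<and> (1+a)*p + (1+b)*q + (1+c)*r = 1
      \<and> X = (p + c*r) *\<^sub>R P0 + (a*p + q) *\<^sub>R P1 + (b*q + r) *\<^sub>R P2"
    then obtain p q r where pqr: "0 \<le> p" "0 \<le> q" "0 \<le> r" "(1+a)*p + (1+b)*q + (1+c)*r = 1"
      and X: "X = (p + c*r) *\<^sub>R P0 + (a*p + q) *\<^sub>R P1 + (b*q + r) *\<^sub>R P2"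
      by blast
    have sum: "(p + c*r) + (a*p + q) + (b*q + r) = 1" using pqr(4) by (simp add: algebra_simps)
    show ?sides
      using pqr t unfolding X bary_affine_combination[OF sum] sides_of_vertex_weights by simp
  next
    assume ?sides
    define s0 s1 s2 where "s0 = side0 a b c (bary0 X) (bary1 X) (bary2 X)"
      and "s1 = side1 a b c (bary0 X) (bary1 X) (bary2 X)"
      and "s2 = side2 a b c (bary0 X) (bary1 X) (bary2 X)"
    define p q r where "p = s0 / (1 + a*b*c)" and "q = s1 / (1 + a*b*c)" and "r = s2 / (1 + a*b*c)"
    have "s0 + c * s2 = (1 + a*b*c) * bary0 X" "a * s0 + s1 = (1 + a*b*c) * bary1 X"
      "b * s1 + s2 = (1 + a*b*c) * bary2 X"
      unfolding s0_def s1_def s2_def by (rule vertex_weights_of_sides)+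
    then have "p + c*r = bary0 X" "a*p + q = bary1 X" "b*q + r = bary2 X"
      using t by (simp_all add: p_def q_def r_def add_divide_distrib[symmetric])
    moreover have "bary0 X + bary1 X + bary2 X = 1" by (simp add: bary2_def)
    ultimately have "(1+a)*p + (1+b)*q + (1+c)*r = 1"
      "X = (p + c*r) *\<^sub>R P0 + (a*p + q) *\<^sub>R P1 + (b*q + r) *\<^sub>R P2"
      using bary_affine_decomp[of X] by (simp_all add: algebra_simps)
    moreover have "0 \<le> p" "0 \<le> q" "0 \<le> r"
      using \<open>?sides\<close> t by (simp_all add: p_def q_def r_def s0_def s1_def s2_def)
    ultimately show "\<exists>p q r. 0 \<le> p \<and> 0 \<le> q \<and> 0 \<le> r \<and> (1+a)*p + (1+b)*q + (1+c)*r = 1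
        \<and> X = (p + c*r) *\<^sub>R P0 + (a*p + q) *\<^sub>R P1 + (b*q + r) *\<^sub>R P2"
      by blast
  qed
qed

lemma ideal_tri_iff_bary:
  assumes "a > 0" "b > 0" "c > 0"
  shows "X \<in> ideal_tri P0 P1 P2 a b c \<longleftrightarrow>
    0 < bary0 X \<and> 0 < bary1 X \<and> 0 < bary2 X \<and> 0 \<le> side0 a b c (bary0 X) (bary1 X) (bary2 X)
      \<and> 0 \<le> side1 a b c (bary0 X) (bary1 X) (bary2 X) \<and> 0 \<le> side2 a b c (bary0 X) (bary1 X) (bary2 X)"
  unfolding ideal_tri_def open_tri_iff_bary Int_iff in_ideal_hull_iff_sides_nonneg[OF assms] by simp

end

section \<open>The Hilbert metric of a triangle\<close>

lemma pos_add_mult_iff_pos_scaled: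
  fixes l k m :: real
  assumes "l > 0" shows "0 < l + k * m \<longleftrightarrow> 0 < 1 + k * (m / l)"
proof -
  have "l + k * m = l * (1 + k * (m / l))" using assms by (simp add: field_simps)
  then show ?thesis using assms by (simp add: zero_less_mult_iff)
qed

lemma pos_one_add_mult_min3_iff:
  fixes k z0 z1 z2 :: real
  assumes "k \<ge> 0"
  shows "(0 < 1 + k * z0 \<and> 0 < 1 + k * z1 \<and> 0 < 1 + k * z2) \<longleftrightarrow> 0 < 1 + k * min z0 (min z1 z2)"
proof -
  have "k * min z0 (min z1 z2) \<le> k * z0" "k * min z0 (min z1 z2) \<le> k * z1"
    "k * min z0 (min z1 z2) \<le> k * z2"
    using assms by (intro mult_left_mono; simp)+
  moreover have "min z0 (min z1 z2) = z0 \<or> min z0 (min z1 z2) = z1 \<or> min z0 (min z1 z2) = z2"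
    by linarith
  ultimately show ?thesis by auto
qed

lemma pos_one_diff_mult_max3_iff:
  fixes k z0 z1 z2 :: real
  assumes "k \<ge> 0"
  shows "(0 < 1 - k * z0 \<and> 0 < 1 - k * z1 \<and> 0 < 1 - k * z2) \<longleftrightarrow> 0 < 1 - k * max z0 (max z1 z2)"
proof -
  have "k * z0 \<le> k * max z0 (max z1 z2)" "k * z1 \<le> k * max z0 (max z1 z2)"
    "k * z2 \<le> k * max z0 (max z1 z2)"
    using assms by (intro mult_left_mono; simp)+
  moreover have "max z0 (max z1 z2) = z0 \<or> max z0 (max z1 z2) = z1 \<or> max z0 (max z1 z2) = z2"
    by linarith
  ultimately show ?thesis by auto
qed

lemma Sup_nonneg_below_inverse:
  fixes m :: real
  assumes "m > 0"
  shows "Sup {s. s \<ge> 0 \<and> 0 < 1 - s * m} = 1 / m"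
proof -
  have "{s. s \<ge> 0 \<and> 0 < 1 - s * m} = {0..<1/m}"
    using assms by (auto simp: field_simps)
  then show ?thesis using assms by simp
qed

lemma abs_convex_comb_le_one:
  fixes \<alpha> \<beta> x y :: real
  assumes "\<alpha> \<ge> 0" "\<beta> \<ge> 0" "\<alpha> + \<beta> \<le> 1" "\<bar>x\<bar> \<le> 1" "\<bar>y\<bar> \<le> 1"
  shows "\<bar>\<alpha> * x + \<beta> * y\<bar> \<le> 1"
proof -
  have "\<bar>\<alpha> * x\<bar> \<le> \<alpha>" "\<bar>\<beta> * y\<bar> \<le> \<beta>" using assms by (simp_all add: abs_mult mult_left_le)
  then show ?thesis using assms by linarith
qed

lemma hexagon_det_le_one_nonneg:
  fixes p q p' q' :: real
  assumes h: "\<bar>p\<bar> \<le> 1" "\<bar>q\<bar> \<le> 1" "\<bar>p - q\<bar> \<le> 1" "\<bar>p'\<bar> \<le> 1" "\<bar>q'\<bar> \<le> 1" "\<bar>p' - q'\<bar> \<le> 1"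
    and q: "0 \<le> q"
  shows "\<bar>p * q' - q * p'\<bar> \<le> 1"
proof -
  have h': "\<bar>q' - p'\<bar> \<le> 1" "\<bar>- p'\<bar> \<le> 1" "\<bar>- q'\<bar> \<le> 1" using h by (simp_all add: abs_minus_commute)
  consider "q \<le> p" | "0 \<le> p" "p \<le> q" | "p \<le> 0" using q by linarith
  then show ?thesis
  proof cases
    case 1
    have "p * q' - q * p' = (p - q) * q' + q * (q' - p')" by (simp add: algebra_simps)
    then show ?thesis using abs_convex_comb_le_one[of "p - q" q q' "q' - p'"] 1 q h h' by auto
  next
    case 2
    have "p * q' - q * p' = p * (q' - p') + (q - p) * (- p')" by (simp add: algebra_simps)
    then show ?thesis using abs_convex_comb_le_one[of p "q - p" "q' - p'" "- p'"] 2 h h' by auto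
  next
    case 3
    have "p * q' - q * p' = q * (- p') + (- p) * (- q')" by (simp add: algebra_simps)
    then show ?thesis using abs_convex_comb_le_one[of q "- p" "- p'" "- q'"] 3 q h h' by auto
  qed
qed

lemma hexagon_det_le_one:
  fixes p q p' q' :: real
  assumes "\<bar>p\<bar> \<le> 1" "\<bar>q\<bar> \<le> 1" "\<bar>p - q\<bar> \<le> 1" "\<bar>p'\<bar> \<le> 1" "\<bar>q'\<bar> \<le> 1" "\<bar>p' - q'\<bar> \<le> 1"
  shows "\<bar>p * q' - q * p'\<bar> \<le> 1"
proof (cases "0 \<le> q")
  case True
  then show ?thesis using hexagon_det_le_one_nonneg[OF assms] by blast
next
  case False
  have "\<bar>(-p) * q' - (-q) * p'\<bar> \<le> 1"
    by (rule hexagon_det_le_one_nonneg) (use assms False in \<open>auto simp: abs_minus_commute\<close>)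
  then show ?thesis by (simp add: abs_minus_commute algebra_simps)
qed

lemma abs_diffs_le_if_spread_le:
  fixes z0 z1 z2 :: real
  assumes "max z0 (max z1 z2) - min z0 (min z1 z2) \<le> 1"
  shows "\<bar>z0 - z2\<bar> \<le> 1" "\<bar>z1 - z2\<bar> \<le> 1" "\<bar>z0 - z2 - (z1 - z2)\<bar> \<le> 1"
  using assms by (auto simp: max_def min_def abs_le_iff split: if_splits)

lemma det_weighted_ratios:
  fixes l0 l1 l2 z0 z1 z2 y0 y1 y2 :: real
  assumes "l0 + l1 + l2 = 1" "l0*z0 + l1*z1 + l2*z2 = 0" "l0*y0 + l1*y1 + l2*y2 = 0"
  shows "(l0*z0) * (l1*y1) - (l1*z1) * (l0*y0) = l0*l1*l2 * ((z0 - z2)*(y1 - y2) - (z1 - z2)*(y0 - y2))"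
proof -
  have A: "l2*z2 = -(l0*z0 + l1*z1)" and B: "l2*y2 = -(l0*y0 + l1*y1)" using assms(2,3) by simp_all
  have "l0*l1*l2 * ((z0 - z2)*(y1 - y2) - (z1 - z2)*(y0 - y2))
      = l0*l1*(l2*(z0*y1 - z1*y0) + (l2*z2)*(y0 - y1) + (l2*y2)*(z1 - z0))"
    by (simp add: algebra_simps)
  also have "\<dots> = l0*l1*((l0 + l1 + l2)*(z0*y1 - z1*y0))"
    unfolding A B by (simp add: algebra_simps)
  also have "\<dots> = (l0*z0) * (l1*y1) - (l1*z1) * (l0*y0)"
    unfolding assms(1) by (simp add: algebra_simps)
  finally show ?thesis by simp
qed

context triangle
begin

text \<open>Moving from X in direction v, the coordinate \<open>bary_i\<close> hits 0 at time
  \<open>-bary_i X / dbary_i v\<close>; the extreme ratios below therefore locate the two boundary points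
  on the line through X in direction v.\<close>

definition bary_ratio_max :: "real \<times> real \<Rightarrow> real \<times> real \<Rightarrow> real" where
  "bary_ratio_max X v = max (dbary0 v / bary0 X) (max (dbary1 v / bary1 X) (dbary2 v / bary2 X))"

definition bary_ratio_min :: "real \<times> real \<Rightarrow> real \<times> real \<Rightarrow> real" where
  "bary_ratio_min X v = min (dbary0 v / bary0 X) (min (dbary1 v / bary1 X) (dbary2 v / bary2 X))"

lemma add_scaled_in_open_tri_iff:
  assumes "X \<in> open_tri P0 P1 P2" and "k \<ge> 0"
  shows "X + k *\<^sub>R v \<in> open_tri P0 P1 P2 \<longleftrightarrow> 0 < 1 + k * bary_ratio_min X v"
proof -
  have l: "0 < bary0 X" "0 < bary1 X" "0 < bary2 X" using assms(1) open_tri_iff_bary by auto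
  show ?thesis
    unfolding open_tri_iff_bary bary_add bary_ratio_min_def pos_add_mult_iff_pos_scaled[OF l(1)]
      pos_add_mult_iff_pos_scaled[OF l(2)] pos_add_mult_iff_pos_scaled[OF l(3)]
    by (rule pos_one_add_mult_min3_iff[OF assms(2)])
qed

lemma diff_scaled_in_open_tri_iff:
  assumes "X \<in> open_tri P0 P1 P2" and "k \<ge> 0"
  shows "X - k *\<^sub>R v \<in> open_tri P0 P1 P2 \<longleftrightarrow> 0 < 1 - k * bary_ratio_max X v"
proof -
  have l: "0 < bary0 X" "0 < bary1 X" "0 < bary2 X" using assms(1) open_tri_iff_bary by auto
  have minus: "X - k *\<^sub>R v = X + (-k) *\<^sub>R v" "1 + - k * z = 1 - k * z" for z :: real by simp_all
  show ?thesis
    unfolding minus open_tri_iff_bary bary_add bary_ratio_max_def pos_add_mult_iff_pos_scaled[OF l(1)]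
      pos_add_mult_iff_pos_scaled[OF l(2)] pos_add_mult_iff_pos_scaled[OF l(3)] minus
    by (rule pos_one_diff_mult_max3_iff[OF assms(2)])
qed

lemma bary_ratio_max_pos_min_neg:
  assumes X: "X \<in> open_tri P0 P1 P2" and v: "v \<noteq> 0"
  shows "bary_ratio_max X v > 0" "bary_ratio_min X v < 0"
proof -
  define z0 z1 z2 where "z0 = dbary0 v / bary0 X" "z1 = dbary1 v / bary1 X" "z2 = dbary2 v / bary2 X"
  have l: "0 < bary0 X" "0 < bary1 X" "0 < bary2 X" using X open_tri_iff_bary by auto
  then have sum: "bary0 X * z0 + bary1 X * z1 + bary2 X * z2 = 0"
    by (simp add: z0_z1_z2_def dbary2_def)
  have nz: "z0 \<noteq> 0 \<or> z1 \<noteq> 0"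
    using dbary_decomp[of v] v l by (auto simp: z0_z1_z2_def)
  have "\<not> (z0 \<le> 0 \<and> z1 \<le> 0 \<and> z2 \<le> 0)"
  proof
    assume "z0 \<le> 0 \<and> z1 \<le> 0 \<and> z2 \<le> 0"
    then have "bary0 X * z0 \<le> 0" "bary1 X * z1 \<le> 0" "bary2 X * z2 \<le> 0"
      using l by (simp_all add: mult_nonneg_nonpos)
    then show False using sum nz l by (smt (verit) mult_eq_0_iff)
  qed
  moreover have "\<not> (z0 \<ge> 0 \<and> z1 \<ge> 0 \<and> z2 \<ge> 0)"
  proof
    assume "z0 \<ge> 0 \<and> z1 \<ge> 0 \<and> z2 \<ge> 0"
    then have "bary0 X * z0 \<ge> 0" "bary1 X * z1 \<ge> 0" "bary2 X * z2 \<ge> 0"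
      using l by simp_all
    then show False using sum nz l by (smt (verit) mult_eq_0_iff)
  qed
  ultimately show "bary_ratio_max X v > 0" "bary_ratio_min X v < 0"
    unfolding bary_ratio_max_def bary_ratio_min_def z0_z1_z2_def[symmetric] by linarith+
qed

lemma exit_parameters_open_tri:
  assumes X: "X \<in> open_tri P0 P1 P2" and v: "v \<noteq> 0" and h: "h > 0"
  shows "Sup {s. s \<ge> 0 \<and> X + s *\<^sub>R ((X + h *\<^sub>R v) - X) \<in> open_tri P0 P1 P2}
      = 1 / (h * - bary_ratio_min X v)"
    and "Sup {s. s \<ge> 0 \<and> X - s *\<^sub>R ((X + h *\<^sub>R v) - X) \<in> open_tri P0 P1 P2}
      = 1 / (h * bary_ratio_max X v)"
proof -
  have m: "0 < h * - bary_ratio_min X v" "0 < h * bary_ratio_max X v"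
    using bary_ratio_max_pos_min_neg[OF X v] h by (simp_all add: mult_pos_neg)
  have "{s. s \<ge> 0 \<and> X + s *\<^sub>R ((X + h *\<^sub>R v) - X) \<in> open_tri P0 P1 P2}
      = {s. s \<ge> 0 \<and> 0 < 1 - s * (h * - bary_ratio_min X v)}"
    using add_scaled_in_open_tri_iff[OF X, of "_ * h" v] h by (auto simp: algebra_simps)
  then show "Sup {s. s \<ge> 0 \<and> X + s *\<^sub>R ((X + h *\<^sub>R v) - X) \<in> open_tri P0 P1 P2}
      = 1 / (h * - bary_ratio_min X v)"
    using Sup_nonneg_below_inverse[OF m(1)] by simp
  have "{s. s \<ge> 0 \<and> X - s *\<^sub>R ((X + h *\<^sub>R v) - X) \<in> open_tri P0 P1 P2}
      = {s. s \<ge> 0 \<and> 0 < 1 - s * (h * bary_ratio_max X v)}"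
    using diff_scaled_in_open_tri_iff[OF X, of "_ * h" v] h by (auto simp: algebra_simps)
  then show "Sup {s. s \<ge> 0 \<and> X - s *\<^sub>R ((X + h *\<^sub>R v) - X) \<in> open_tri P0 P1 P2}
      = 1 / (h * bary_ratio_max X v)"
    using Sup_nonneg_below_inverse[OF m(2)] by simp
qed

lemma hilbert_dist_open_tri:
  assumes X: "X \<in> open_tri P0 P1 P2" and v: "v \<noteq> 0" and h: "0 < h" "h * - bary_ratio_min X v < 1"
  shows "hilbert_dist (open_tri P0 P1 P2) X (X + h *\<^sub>R v)
       = ln (1 + h * bary_ratio_max X v) - ln (1 - h * - bary_ratio_min X v)"
proof -
  define M N where "M = - bary_ratio_min X v" and "N = bary_ratio_max X v"
  have M: "M > 0" and N: "N > 0" using bary_ratio_max_pos_min_neg[OF X v] by (auto simp: M_def N_def)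
  have hM: "h * M < 1" using h by (simp add: M_def)
  have "cr (- (1 / (h * N))) 0 1 (1 / (h * M)) = (1 + h * N) / (1 - h * M)"
    unfolding cr_def using h M N hM by (simp add: field_simps)
  moreover have "(1 + h * N) / (1 - h * M) \<ge> 1" using h M N hM by (simp add: field_simps)
  moreover have "X \<noteq> X + h *\<^sub>R v" using h v by simp
  ultimately have "hilbert_dist (open_tri P0 P1 P2) X (X + h *\<^sub>R v) = ln ((1 + h * N) / (1 - h * M))"
    unfolding hilbert_dist_def Let_def exit_parameters_open_tri[OF X v h(1)] M_def N_def by simp
  also have "\<dots> = ln (1 + h * N) - ln (1 - h * M)"
    using h M N hM by (intro ln_divide_pos) (auto simp: add_pos_pos)
  finally show ?thesis by (simp add: M_def N_def)
qed

lemma hilbert_norm_open_tri: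
  assumes X: "X \<in> open_tri P0 P1 P2"
  shows "hilbert_norm (open_tri P0 P1 P2) X v = bary_ratio_max X v - bary_ratio_min X v"
proof (cases "v = 0")
  case True
  then have "(\<lambda>h. hilbert_dist (open_tri P0 P1 P2) X (X + h *\<^sub>R v) / h) = (\<lambda>h. 0)"
    by (simp add: hilbert_dist_def)
  moreover have "bary_ratio_max X v = 0" "bary_ratio_min X v = 0"
    using True
    by (simp_all add: bary_ratio_max_def bary_ratio_min_def dbary0_def dbary1_def dbary2_def det2_def)
  ultimately show ?thesis unfolding hilbert_norm_def by (simp add: tendsto_Lim)
next
  case False
  define M N where "M = - bary_ratio_min X v" and "N = bary_ratio_max X v"
  have M: "M > 0" using bary_ratio_max_pos_min_neg[OF X False] by (simp add: M_def)
  define \<phi> where "\<phi> h = ln (1 + h * N) - ln (1 - h * M)" for h :: real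
  have "(\<phi> has_real_derivative (N + M)) (at 0 within {0<..})"
    unfolding \<phi>_def by (auto intro!: derivative_eq_intros)
  then have lim: "((\<lambda>h. (\<phi> h - \<phi> 0) / (h - 0)) \<longlongrightarrow> N + M) (at_right 0)"
    by (simp add: has_field_derivative_iff)
  have "\<forall>\<^sub>F h in at_right 0. h \<in> {0<..<1/M}"
    using M by (intro eventually_at_right_real) simp
  then have "\<forall>\<^sub>F h in at_right 0.
      (\<phi> h - \<phi> 0) / (h - 0) = hilbert_dist (open_tri P0 P1 P2) X (X + h *\<^sub>R v) / h"
    by eventually_elim
      (use M in \<open>simp add: hilbert_dist_open_tri[OF X False] \<phi>_def M_def N_def field_simps\<close>)
  with lim have "((\<lambda>h. hilbert_dist (open_tri P0 P1 P2) X (X + h *\<^sub>R v) / h) \<longlongrightarrow> N + M) (at_right 0)"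
    by (rule Lim_transform_eventually)
  then show ?thesis
    unfolding hilbert_norm_def M_def N_def by (simp add: tendsto_Lim)
qed

lemma det2_dbary: "det2 u w = D * (dbary0 u * dbary1 w - dbary1 u * dbary0 w)"
proof -
  have "det2 u w = det2 (dbary0 u *\<^sub>R e + dbary1 u *\<^sub>R f) (dbary0 w *\<^sub>R e + dbary1 w *\<^sub>R f)"
    using dbary_decomp[of u] dbary_decomp[of w] by simp
  also have "\<dots> = dbary0 u * dbary1 w * D + dbary1 u * dbary0 w * det2 f e"
    by (simp only: det2_bilinear det2_self) (simp add: algebra_simps)
  finally show ?thesis by (simp add: det2_swap[of e f] algebra_simps)
qed

lemma abs_det2_le_if_hilbert_unit:
  assumes X: "X \<in> open_tri P0 P1 P2"
    and u: "bary_ratio_max X u - bary_ratio_min X u \<le> 1"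
    and w: "bary_ratio_max X w - bary_ratio_min X w \<le> 1"
  shows "\<bar>det2 u w\<bar> \<le> \<bar>D\<bar> * (bary0 X * bary1 X * bary2 X)"
proof -
  define l0 l1 l2 where "l0 = bary0 X" "l1 = bary1 X" "l2 = bary2 X"
  have l: "0 < l0" "0 < l1" "0 < l2" using X open_tri_iff_bary l0_l1_l2_def by auto
  have sum: "l0 + l1 + l2 = 1" by (simp add: l0_l1_l2_def bary2_def)
  define z0 z1 z2 where "z0 = dbary0 u / l0" "z1 = dbary1 u / l1" "z2 = dbary2 u / l2"
  define y0 y1 y2 where "y0 = dbary0 w / l0" "y1 = dbary1 w / l1" "y2 = dbary2 w / l2"
  have dbary: "dbary0 u = l0*z0" "dbary1 u = l1*z1" "dbary0 w = l0*y0" "dbary1 w = l1*y1"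
    using l by (simp_all add: z0_z1_z2_def y0_y1_y2_def)
  have "l0*z0 + l1*z1 + l2*z2 = 0" "l0*y0 + l1*y1 + l2*y2 = 0"
    using l by (simp_all add: z0_z1_z2_def y0_y1_y2_def dbary2_def)
  note weighted = det_weighted_ratios[OF sum this]
  have "max z0 (max z1 z2) - min z0 (min z1 z2) \<le> 1" "max y0 (max y1 y2) - min y0 (min y1 y2) \<le> 1"
    using u w unfolding bary_ratio_max_def bary_ratio_min_def z0_z1_z2_def y0_y1_y2_def l0_l1_l2_def .
  then have hex: "\<bar>(z0 - z2)*(y1 - y2) - (z1 - z2)*(y0 - y2)\<bar> \<le> 1"
    by (intro hexagon_det_le_one) (use abs_diffs_le_if_spread_le in blast)+
  have "\<bar>det2 u w\<bar> = \<bar>D\<bar> * (l0*l1*l2 * \<bar>(z0 - z2)*(y1 - y2) - (z1 - z2)*(y0 - y2)\<bar>)"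
    using l by (subst det2_dbary) (simp add: dbary weighted abs_mult)
  also have "\<dots> \<le> \<bar>D\<bar> * (l0*l1*l2 * 1)"
    using hex l by (intro mult_left_mono) auto
  finally show ?thesis by (simp add: l0_l1_l2_def)
qed

text \<open>The maximal parallelogram is spanned by \<open>bary0 X (P0 - X)\<close> and \<open>bary1 X (P1 - X)\<close>,
  written below in the basis \<open>e, f\<close>.\<close>

lemma hilbert_unit_pair_attaining:
  assumes X: "X \<in> open_tri P0 P1 P2"
  obtains u w where "bary_ratio_max X u - bary_ratio_min X u = 1"
    "bary_ratio_max X w - bary_ratio_min X w = 1"
    "\<bar>det2 u w\<bar> = \<bar>D\<bar> * (bary0 X * bary1 X * bary2 X)"
proof -
  define l0 l1 l2 where "l0 = bary0 X" "l1 = bary1 X" "l2 = bary2 X"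
  have l: "0 < l0" "0 < l1" "0 < l2" using X open_tri_iff_bary l0_l1_l2_def by auto
  have l2: "l2 = 1 - l0 - l1" by (simp add: l0_l1_l2_def bary2_def)
  define u w where "u = (l0*(1-l0)) *\<^sub>R e + (- (l0*l1)) *\<^sub>R f"
    and "w = (- (l0*l1)) *\<^sub>R e + (l1*(1-l1)) *\<^sub>R f"
  have du: "dbary0 u = l0*(1-l0)" "dbary1 u = - (l0*l1)" "dbary2 u = - (l0*l2)"
    unfolding u_def dbary2_def dbary_basis by (simp_all add: l2 algebra_simps)
  have dw: "dbary0 w = - (l0*l1)" "dbary1 w = l1*(1-l1)" "dbary2 w = - (l1*l2)"
    unfolding w_def dbary2_def dbary_basis by (simp_all add: l2 algebra_simps)
  have "bary_ratio_max X u - bary_ratio_min X u = 1"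
    using l unfolding bary_ratio_max_def bary_ratio_min_def du l0_l1_l2_def[symmetric]
    by (auto simp: l2 max_def min_def)
  moreover have "bary_ratio_max X w - bary_ratio_min X w = 1"
    using l unfolding bary_ratio_max_def bary_ratio_min_def dw l0_l1_l2_def[symmetric]
    by (auto simp: l2 max_def min_def)
  moreover have "dbary0 u * dbary1 w - dbary1 u * dbary0 w = l0*l1*l2"
    unfolding du dw l2 by (simp add: algebra_simps)
  then have "\<bar>det2 u w\<bar> = \<bar>D\<bar> * (bary0 X * bary1 X * bary2 X)"
    using l by (subst det2_dbary) (simp add: abs_mult l0_l1_l2_def)
  ultimately show thesis using that by blast
qed

lemma hilbert_area_density_open_tri:
  assumes X: "X \<in> open_tri P0 P1 P2"
  shows "hilbert_area_density (open_tri P0 P1 P2) X = 1 / (\<bar>D\<bar> * (bary0 X * bary1 X * bary2 X))"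
proof -
  define S where "S = {(u, w). hilbert_norm (open_tri P0 P1 P2) X u \<le> 1
      \<and> hilbert_norm (open_tri P0 P1 P2) X w \<le> 1}"
  have area: "\<bar>fst (fst uw) * snd (snd uw) - snd (fst uw) * fst (snd uw)\<bar> = \<bar>det2 (fst uw) (snd uw)\<bar>" for uw
    by (simp add: det2_def)
  obtain u w where "bary_ratio_max X u - bary_ratio_min X u = 1"
    "bary_ratio_max X w - bary_ratio_min X w = 1"
    and uw: "\<bar>det2 u w\<bar> = \<bar>D\<bar> * (bary0 X * bary1 X * bary2 X)"
    using hilbert_unit_pair_attaining[OF X] by blast
  then have "(u, w) \<in> S" by (simp add: S_def hilbert_norm_open_tri[OF X])
  moreover have "\<bar>det2 u' w'\<bar> \<le> \<bar>D\<bar> * (bary0 X * bary1 X * bary2 X)" if "(u', w') \<in> S" for u' w'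
    using that abs_det2_le_if_hilbert_unit[OF X] by (simp add: S_def hilbert_norm_open_tri[OF X])
  ultimately have "(SUP uw \<in> S. \<bar>det2 (fst uw) (snd uw)\<bar>) = \<bar>D\<bar> * (bary0 X * bary1 X * bary2 X)"
    using uw by (intro cSup_eq_maximum) force+
  then show ?thesis unfolding hilbert_area_density_def area S_def[symmetric] by simp
qed

end

section \<open>One-dimensional integrals\<close>

lemma frac_le_frac_iff:
  fixes k x y :: real
  assumes "k > 0" "x > -k" "y > -k"
  shows "x / (x + k) \<le> y / (y + k) \<longleftrightarrow> x \<le> y"
proof -
  have "x / (x + k) \<le> y / (y + k) \<longleftrightarrow> x * (y + k) \<le> y * (x + k)"
    using assms by (simp add: divide_simps)
  also have "\<dots> \<longleftrightarrow> k * x \<le> k * y" by (simp add: algebra_simps)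
  finally show ?thesis using assms by simp
qed

lemma intervals_exhausting_greaterThan_one:
  fixes n :: nat
  shows "1 < 1 + 1/(real n + 1)" "1 + 1/(real n + 1) < real n + 3"
    "1 + 1/(real (Suc n) + 1) \<le> 1 + 1/(real n + 1)"
    "(\<Union>n. {1 + 1/(real n + 1) .. real n + 3}) = {1<..}"
proof -
  have "1/(real n + 1) \<le> 1" "0 \<le> real n" by (simp_all add: divide_simps)
  then show "1 < 1 + 1/(real n + 1)" "1 + 1/(real n + 1) < real n + 3" by (simp, linarith)
  have "1/(real (Suc n) + 1) \<le> 1/(real n + 1)" by (simp add: divide_simps)
  then show "1 + 1/(real (Suc n) + 1) \<le> 1 + 1/(real n + 1)" by simp
  show "(\<Union>n. {1 + 1/(real n + 1) .. real n + 3}) = {1<..}"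
  proof (intro equalityI subsetI)
    fix x :: real assume "x \<in> {1<..}"
    then obtain n1 n2 :: nat where n1: "inverse (real (Suc n1)) < x - 1" and n2: "x < real n2"
      using reals_Archimedean[of "x - 1"] reals_Archimedean2[of x] by auto
    define m where "m = max n1 n2"
    have "1/(real m + 1) \<le> inverse (real (Suc n1))"
      by (simp add: m_def divide_simps inverse_eq_divide)
    then have "x \<in> {1 + 1/(real m + 1) .. real m + 3}" using n1 n2 by (simp add: m_def)
    then show "x \<in> (\<Union>n. {1 + 1/(real n + 1) .. real n + 3})" by blast
  next
    fix x assume "x \<in> (\<Union>n. {1 + 1/(real n + 1) .. real n + 3})"
    then obtain m :: nat where "1 + 1/(real m + 1) \<le> x" by auto
    moreover have "0 < 1/(real m + 1)" by simp
    ultimately show "x \<in> {1<..}" by (simp only: greaterThan_iff)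
  qed
qed

lemma nn_integral_mobius_substitution:
  fixes f :: "real \<Rightarrow> ennreal" and k :: real
  assumes [measurable]: "f \<in> borel_measurable borel" and k: "k > 0"
  shows "(\<integral>\<^sup>+w. f w * indicator {1/(1+k)<..<1} w \<partial>lborel)
       = (\<integral>\<^sup>+s. f (s/(s+k)) * ennreal (k/(s+k)^2) * indicator {1<..} s \<partial>lborel)"
proof -
  define g where "g s = s/(s+k)" for s
  define l u where "l n = 1 + 1/(real n + 1)" and "u n = real n + 3" for n :: nat
  have g_le: "g x \<le> g y \<longleftrightarrow> x \<le> y" if "x > -k" "y > -k" for x y
    using frac_le_frac_iff[OF k that] by (simp add: g_def)
  have l: "1 < l n" "l n < u n" "l (Suc n) \<le> l n" and I: "(\<Union>n. {l n..u n}) = {1<..}" for n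
    unfolding l_def u_def by (rule intervals_exhausting_greaterThan_one)+
  have J: "(\<Union>n. {g (l n)..g (u n)}) = {1/(1+k)<..<1}"
  proof (intro equalityI subsetI)
    fix x assume x: "x \<in> {1/(1+k)<..<1::real}"
    define s where "s = k*x/(1-x)"
    have gs: "g s = x" using x k by (simp add: g_def s_def field_simps)
    have "1 < s" using x k by (simp add: s_def field_simps)
    then obtain n where "s \<in> {l n..u n}" using I by blast
    then show "x \<in> (\<Union>n. {g (l n)..g (u n)})"
      using g_le[of "l n" s] g_le[of s "u n"] l[of n] k \<open>1 < s\<close> gs by auto
  next
    fix x assume "x \<in> (\<Union>n. {g (l n)..g (u n)})"
    then obtain n where "g (l n) \<le> x" "x \<le> g (u n)" by auto
    moreover have "g 1 < g (l n)" using g_le[of "l n" 1] l[of n] k by force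
    moreover have "g (u n) < 1" using l[of n] k by (simp add: g_def)
    ultimately show "x \<in> {1/(1+k)<..<1}" by (simp add: g_def add.commute)
  qed
  have "(\<integral>\<^sup>+w. f w * indicator {1/(1+k)<..<1} w \<partial>lborel)
      = (\<integral>\<^sup>+s. f (g s) * ennreal (k/(s+k)^2) * indicator {1<..} s \<partial>lborel)"
  proof (rule nn_integral_substitution_exhaustion[where g' = "\<lambda>x. k/(x+k)^2", OF _ _ _ _ _ _ _ _ _ _ I J])
    show "(g has_real_derivative k/(x+k)^2) (at x)" if "x \<in> {1<..}" for x
      using that k unfolding g_def
      by (auto intro!: derivative_eq_intros simp: power2_eq_square field_simps)
    show "continuous_on {1<..} (\<lambda>x. k/(x+k)^2)"
      using k by (intro continuous_intros) auto
    show "incseq (\<lambda>n. {l n..u n})"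
    proof (rule incseq_SucI)
      show "{l n..u n} \<subseteq> {l (Suc n)..u (Suc n)}" for n using l(3)[of n] by (auto simp: u_def)
    qed
    show "incseq (\<lambda>n. {g (l n)..g (u n)})"
    proof (rule incseq_SucI)
      fix n
      have "g (l (Suc n)) \<le> g (l n)" "g (u n) \<le> g (u (Suc n))"
        using g_le l(1)[of n] l(1)[of "Suc n"] l(3)[of n] k by (simp_all add: u_def)
      then show "{g (l n)..g (u n)} \<subseteq> {g (l (Suc n))..g (u (Suc n))}" by auto
    qed
    show "{l n..u n} \<subseteq> {1<..}" for n using l(1)[of n] by auto
  qed (use l k in \<open>auto simp: g_def\<close>)
  then show ?thesis by (simp add: g_def)
qed

text \<open>After the shear \<open>x1 = (1 - x0) w\<close>, a point with parameter w lies in the ideal triangle iff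
  the ratio \<open>x0 / (1 - x0)\<close> lies between the following two bounds.\<close>

definition ratio_lower :: "real \<Rightarrow> real \<Rightarrow> real \<Rightarrow> real \<Rightarrow> real" where
  "ratio_lower a b c w = max (c*(1-w) - b*c*w) ((b*w - (1-w))/(a*b))"

definition ratio_upper :: "real \<Rightarrow> real \<Rightarrow> real \<Rightarrow> real" where
  "ratio_upper a c w = (w + a*c*(1-w))/a"

definition w_integrand :: "real \<Rightarrow> real \<Rightarrow> real \<Rightarrow> real \<Rightarrow> real" where
  "w_integrand a b c w = 1/(w*(1-w)) * ln (ratio_upper a c w / ratio_lower a b c w)"

lemma w_integrand_measurable [measurable]: "w_integrand a b c \<in> borel_measurable borel"
  unfolding w_integrand_def ratio_lower_def ratio_upper_def by measurable

lemma ratio_lower_pos: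
  assumes "a > 0" "b > 0" "c > 0" "0 < w" "w < 1" "w \<noteq> 1/(1+b)"
  shows "ratio_lower a b c w > 0"
proof (cases "w*(1+b) < 1")
  case True
  then have "c*(1-w) - b*c*w = c*(1 - w*(1+b))" by (simp add: algebra_simps)
  then show ?thesis using True assms by (simp add: ratio_lower_def less_max_iff_disj)
next
  case False
  moreover have "w*(1+b) \<noteq> 1" using assms by (auto simp: field_simps)
  ultimately have "b*w - (1-w) > 0" by (simp add: algebra_simps)
  then have "(b*w - (1-w))/(a*b) > 0" using assms by simp
  then show ?thesis by (simp add: ratio_lower_def less_max_iff_disj)
qed

lemma ratio_lower_le_upper:
  assumes "a > 0" "b > 0" "c > 0" "0 < w" "w < 1"
  shows "ratio_lower a b c w \<le> ratio_upper a c w"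
proof -
  have "a*(c*(1-w) - b*c*w) \<le> w + a*c*(1-w)"
    using assms by (simp add: algebra_simps)
  then have "c*(1-w) - b*c*w \<le> ratio_upper a c w"
    using assms by (simp add: ratio_upper_def pos_le_divide_eq mult.commute)
  moreover have "b*w - (1-w) \<le> b*(w + a*c*(1-w))"
    using assms mult_nonneg_nonneg[of "1-w" "1+a*b*c"] by (simp add: algebra_simps)
  then have "(b*w - (1-w))/(a*b) \<le> b*(w + a*c*(1-w))/(a*b)"
    using assms by (intro divide_right_mono) auto
  then have "(b*w - (1-w))/(a*b) \<le> ratio_upper a c w"
    using assms by (simp add: ratio_upper_def)
  ultimately show ?thesis by (simp add: ratio_lower_def)
qed

lemma w_integrand_substitution_above:
  assumes a: "a > 0" and b: "b > 0" and c: "c > 0" and s: "s > 1"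
  shows "w_integrand a b c (s/(s+b)) * (b/(s+b)^2) = (1/s) * ln ((s + a*b*c)/(s-1))"
proof -
  define q where "q = 1/(s+b)"
  have q: "q > 0" "s/(s+b) = s*q" "1 - s*q = b*q" "b/(s+b)^2 = b*q^2"
    using s b by (simp_all add: q_def field_simps power2_eq_square)
  have "c*(b*q) - b*c*(s*q) = b*c*q*(1-s)" "(b*(s*q) - b*q)/(a*b) = (s-1)*q/a"
    using a b by (simp_all add: field_simps)
  moreover have "b*c*q*(1-s) \<le> 0" "0 \<le> (s-1)*q/a"
    using a b c s q by (simp_all add: mult_nonneg_nonpos)
  ultimately have lower: "ratio_lower a b c (s*q) = (s-1)*q/a"
    by (simp add: ratio_lower_def q(3))
  have upper: "ratio_upper a c (s*q) = (s + a*b*c)*q/a"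
    unfolding ratio_upper_def q(3) by (simp add: algebra_simps)
  have "(s + a*b*c)*q/a / ((s-1)*q/a) = (s + a*b*c)/(s-1)"
    using a s q by simp
  then have "w_integrand a b c (s*q) = 1/(s*q*(b*q)) * ln ((s + a*b*c)/(s-1))"
    unfolding w_integrand_def q(3) lower upper by simp
  then show ?thesis
    unfolding q(2,4) using b s q by (simp add: power2_eq_square)
qed

lemma w_integrand_substitution_below:
  assumes a: "a > 0" and b: "b > 0" and c: "c > 0" and s: "s > 1"
  shows "w_integrand a b c (1 - s/(s+1/b)) * ((1/b)/(s+1/b)^2)
       = (1/s) * ln ((1 + a*b*c* s)/(a*b*c*(s-1)))"
proof -
  define q where "q = 1/(b* s+1)"
  have "b* s + 1 > 0" using s b by (simp add: add_pos_pos)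
  then have q: "q > 0" "1 - s/(s+1/b) = q" "1 - q = b* s*q" "(1/b)/(s+1/b)^2 = b*q^2"
    using b by (simp_all add: q_def field_simps power2_eq_square)
  have "c*(b* s*q) - b*c*q = b*c*(s-1)*q" "(b*q - b* s*q)/(a*b) = (1-s)*q/a"
    using a b by (simp_all add: field_simps)
  moreover have "0 \<le> b*c*(s-1)*q" "(1-s)*q/a \<le> 0"
    using a b c s q by (simp_all add: mult_nonpos_nonneg divide_nonpos_pos)
  ultimately have lower: "ratio_lower a b c q = b*c*(s-1)*q"
    by (simp add: ratio_lower_def q(3))
  have upper: "ratio_upper a c q = (1 + a*b*c* s)*q/a"
    unfolding ratio_upper_def q(3) by (simp add: algebra_simps)
  have "(1 + a*b*c* s)*q/a / (b*c*(s-1)*q) = (1 + a*b*c* s)/(a*b*c*(s-1))"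
    using a q by simp
  then have "w_integrand a b c q = 1/(q*(b* s*q)) * ln ((1 + a*b*c* s)/(a*b*c*(s-1)))"
    unfolding w_integrand_def q(3) lower upper by simp
  then show ?thesis
    unfolding q(2,4) using b s q by (simp add: power2_eq_square)
qed

lemma nn_integral_w_integrand_above:
  assumes a: "a > 0" and b: "b > 0" and c: "c > 0"
  shows "(\<integral>\<^sup>+w. ennreal (w_integrand a b c w) * indicator {1/(1+b)<..<1} w \<partial>lborel)
       = (\<integral>\<^sup>+s. ennreal ((1/s) * ln ((s + a*b*c)/(s-1))) * indicator {1<..} s \<partial>lborel)"
  unfolding nn_integral_mobius_substitution[OF _ b, of "\<lambda>w. ennreal (w_integrand a b c w)", simplified]
proof (intro nn_integral_cong)
  fix s :: real
  show "ennreal (w_integrand a b c (s/(s+b))) * ennreal (b/(s+b)^2) * indicator {1<..} s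
      = ennreal ((1/s) * ln ((s + a*b*c)/(s-1))) * indicator {1<..} s"
    using w_integrand_substitution_above[OF a b c, of s] b
    by (cases "1 < s") (simp_all add: ennreal_mult''[symmetric])
qed

lemma nn_integral_w_integrand_below:
  assumes a: "a > 0" and b: "b > 0" and c: "c > 0"
  shows "(\<integral>\<^sup>+w. ennreal (w_integrand a b c w) * indicator {0<..<1/(1+b)} w \<partial>lborel)
       = (\<integral>\<^sup>+s. ennreal ((1/s) * ln ((1 + a*b*c* s)/(a*b*c*(s-1)))) * indicator {1<..} s \<partial>lborel)"
proof -
  have "1/(1 + 1/b) = 1 - 1/(1+b)" using b by (simp add: field_simps)
  then have reflect: "indicator {0<..<1/(1+b)} (1 - x) = (indicator {1/(1+1/b)<..<1} x :: ennreal)" for x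
    by (auto simp: indicator_def)
  have "(\<integral>\<^sup>+w. ennreal (w_integrand a b c w) * indicator {0<..<1/(1+b)} w \<partial>lborel)
      = (\<integral>\<^sup>+x. ennreal (w_integrand a b c (1 - x)) * indicator {1/(1+1/b)<..<1} x \<partial>lborel)"
    using nn_integral_real_affine[of "\<lambda>w. ennreal (w_integrand a b c w) * indicator {0<..<1/(1+b)} w" "-1" 1]
    by (simp add: reflect)
  also have "\<dots> = (\<integral>\<^sup>+s. ennreal (w_integrand a b c (1 - s/(s+1/b))) * ennreal ((1/b)/(s+1/b)^2)
      * indicator {1<..} s \<partial>lborel)"
    using b by (intro nn_integral_mobius_substitution) auto
  also have "\<dots> = (\<integral>\<^sup>+s. ennreal ((1/s) * ln ((1 + a*b*c* s)/(a*b*c*(s-1)))) * indicator {1<..} s \<partial>lborel)"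
  proof (intro nn_integral_cong)
    fix s :: real
    show "ennreal (w_integrand a b c (1 - s/(s+1/b))) * ennreal ((1/b)/(s+1/b)^2) * indicator {1<..} s
        = ennreal ((1/s) * ln ((1 + a*b*c* s)/(a*b*c*(s-1)))) * indicator {1<..} s"
      using w_integrand_substitution_below[OF a b c, of s] b
      by (cases "1 < s") (simp_all add: ennreal_mult''[symmetric])
  qed
  finally show ?thesis .
qed

lemma B_integrand_split:
  assumes t: "t > 0" and s: "s > 1"
  shows "B_integrand t s = (1/s) * ln ((1 + t* s)/(t*(s-1))) + (1/s) * ln ((s + t)/(s-1))"
    and "0 \<le> (1/s) * ln ((1 + t* s)/(t*(s-1)))" "0 \<le> (1/s) * ln ((s + t)/(s-1))"
proof -
  have p: "(1 + t* s)/(t*(s-1)) \<ge> 1" "(s + t)/(s-1) \<ge> 1" using t s by (simp_all add: field_simps)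
  then show "0 \<le> (1/s) * ln ((1 + t* s)/(t*(s-1)))" "0 \<le> (1/s) * ln ((s + t)/(s-1))"
    using s by simp_all
  have "ln ((1 + t* s)/(t*(s-1))) + ln ((s + t)/(s-1)) = ln ((1 + t* s)/(t*(s-1)) * ((s + t)/(s-1)))"
    using p by (intro ln_mult_pos[symmetric]) auto
  also have "(1 + t* s)/(t*(s-1)) * ((s + t)/(s-1)) = ((s*t+1)*(s+t))/(t*(s-1)^2)"
    by (simp add: power2_eq_square algebra_simps)
  finally show "B_integrand t s = (1/s) * ln ((1 + t* s)/(t*(s-1))) + (1/s) * ln ((s + t)/(s-1))"
    unfolding B_integrand_def by (simp add: add_divide_distrib[symmetric])
qed

lemma nn_integral_w_integrand:
  assumes a: "a > 0" and b: "b > 0" and c: "c > 0"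
  shows "(\<integral>\<^sup>+w. ennreal (w_integrand a b c w) * indicator ({0<..<1} - {1/(1+b)}) w \<partial>lborel)
       = (\<integral>\<^sup>+s. ennreal (B_integrand (a*b*c) s) * indicator {1<..} s \<partial>lborel)"
proof -
  have t: "a*b*c > 0" using a b c by simp
  have "indicator ({0<..<1} - {m}) w = (indicator {0<..<m} w + indicator {m<..<1} w :: ennreal)"
    if "0 < m" "m < 1" for m w :: real
    using that by (auto simp: indicator_def)
  then have "indicator ({0<..<1} - {1/(1+b)}) w
      = (indicator {0<..<1/(1+b)} w + indicator {1/(1+b)<..<1} w :: ennreal)" for w
    using b by simp
  then have "(\<integral>\<^sup>+w. ennreal (w_integrand a b c w) * indicator ({0<..<1} - {1/(1+b)}) w \<partial>lborel)
      = (\<integral>\<^sup>+w. ennreal (w_integrand a b c w) * indicator {0<..<1/(1+b)} w \<partial>lborel)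
      + (\<integral>\<^sup>+w. ennreal (w_integrand a b c w) * indicator {1/(1+b)<..<1} w \<partial>lborel)"
    by (simp add: distrib_left nn_integral_add)
  also have "\<dots> = (\<integral>\<^sup>+s. ennreal ((1/s) * ln ((1 + a*b*c* s)/(a*b*c*(s-1)))) * indicator {1<..} s
      + ennreal ((1/s) * ln ((s + a*b*c)/(s-1))) * indicator {1<..} s \<partial>lborel)"
    unfolding nn_integral_w_integrand_below[OF a b c] nn_integral_w_integrand_above[OF a b c]
    by (rule nn_integral_add[symmetric]) auto
  also have "\<dots> = (\<integral>\<^sup>+s. ennreal (B_integrand (a*b*c) s) * indicator {1<..} s \<partial>lborel)"
    using B_integrand_split[OF t]
    by (intro nn_integral_cong) (auto simp: indicator_def ennreal_plus[symmetric] simp del: ennreal_plus)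
  finally show ?thesis .
qed

lemma B_integrand_measurable [measurable]: "B_integrand t \<in> borel_measurable borel"
  unfolding B_integrand_def by measurable

lemma B_integrand_nonneg:
  assumes "t > 0" "s > 1"
  shows "0 \<le> B_integrand t s"
  using B_integrand_split[OF assms] by simp

lemma neg_ln_le_inverse_sqrt:
  fixes u :: real
  assumes "u > 0" shows "- ln u \<le> 2 * u powr (-1/2)"
proof -
  have "ln (u powr (-1/2)) = (-1/2) * ln u" using assms by (simp add: ln_powr)
  moreover have "ln (u powr (-1/2)) \<le> u powr (-1/2) - 1" using assms by (intro ln_le_minus_one) simp
  ultimately show ?thesis by linarith
qed

lemma B_integrand_le_near_one:
  assumes t: "t > 0" and s: "1 < s" "s \<le> 2"
  shows "B_integrand t s \<le> (2*t+1)*(2+t)/t + 4 * (s-1) powr (-1/2)"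
proof -
  define N where "N = (s*t+1)*(s+t)"
  have s1: "s - 1 > 0" using s by simp
  have N: "N > 0" using s t by (simp add: N_def add_pos_pos)
  have "N \<le> (2*t+1)*(2+t)" unfolding N_def using s t by (intro mult_mono) auto
  then have "N/t \<le> (2*t+1)*(2+t)/t" using t by (intro divide_right_mono) auto
  then have "ln (N/t) \<le> (2*t+1)*(2+t)/t"
    using ln_bound[of "N/t"] N t by simp
  moreover have "ln (N/(t*(s-1)^2)) = ln (N/t) - 2 * ln (s-1)"
    using N t s1 by (simp add: ln_div ln_mult ln_realpow)
  moreover have "- ln (s-1) \<le> 2 * (s-1) powr (-1/2)" using s1 by (rule neg_ln_le_inverse_sqrt)
  ultimately have "ln (N/(t*(s-1)^2)) \<le> (2*t+1)*(2+t)/t + 4 * (s-1) powr (-1/2)" by linarith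
  moreover have "B_integrand t s \<le> ln (N/(t*(s-1)^2))"
  proof -
    have "0 \<le> ln (N/(t*(s-1)^2))"
      using B_integrand_nonneg[OF t s(1)] s by (simp add: B_integrand_def N_def zero_le_divide_iff)
    then show ?thesis unfolding B_integrand_def N_def using s by (intro mult_left_le_one_le) auto
  qed
  ultimately show ?thesis by linarith
qed

lemma B_integrand_le_inverse_square:
  assumes t: "t > 0" and s: "2 \<le> s"
  shows "B_integrand t s \<le> 4*(1+t)^2/t * (1/s^2)"
proof -
  define X where "X = ((s*t+1)*(s+t))/(t*(s-1)^2)"
  have s1: "s - 1 > 0" using s by simp
  have "X - 1 = ((s*t+1)*(s+t) - t*(s-1)^2)/(t*(s-1)^2)"
    using t s1 by (simp add: X_def diff_divide_distrib)
  also have "(s*t+1)*(s+t) - t*(s-1)^2 = s*(1+t)^2" by (simp add: power2_eq_square algebra_simps)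
  finally have X1: "X - 1 = s*(1+t)^2/(t*(s-1)^2)" .
  have "B_integrand t s = (1/s) * ln X" unfolding B_integrand_def X_def ..
  also have "\<dots> \<le> (1/s) * (X - 1)"
    using t s by (intro mult_left_mono ln_le_minus_one) (auto simp: X_def add_pos_pos)
  also have "\<dots> = (1+t)^2/(t*(s-1)^2)" unfolding X1 using s by (simp add: field_simps)
  also have "\<dots> \<le> (1+t)^2/(t*(s^2/4))"
  proof -
    have "(s/2)^2 \<le> (s-1)^2" using s by (intro power_mono) auto
    then show ?thesis
      using t s by (intro divide_left_mono mult_left_mono mult_pos_pos) (auto simp: power_divide)
  qed
  also have "\<dots> = 4*(1+t)^2/t * (1/s^2)" by (simp add: field_simps)
  finally show ?thesis .
qed

lemma B_integrand_le_majorant: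
  assumes t: "t > 0"
  shows "ennreal (B_integrand t s) * indicator {1<..} s
    \<le> ennreal ((2*t+1)*(2+t)/t) * indicator {1..2} s + ennreal (4 * (s-1) powr (-1/2)) * indicator {1..2} s
      + ennreal (4*(1+t)^2/t * (1/s^2)) * indicator {2..} s"
proof (cases "1 < s")
  case True
  show ?thesis
  proof (cases "s \<le> 2")
    case True2: True
    have "ennreal (B_integrand t s) \<le> ennreal ((2*t+1)*(2+t)/t) + ennreal (4 * (s-1) powr (-1/2))"
      using B_integrand_le_near_one[OF t True True2] t by (simp flip: ennreal_plus)
    then show ?thesis using True True2 by (simp add: add_increasing2 flip: distrib_right)
  next
    case False
    then have "ennreal (B_integrand t s) \<le> ennreal (4*(1+t)^2/t * (1/s^2))"
      using B_integrand_le_inverse_square[OF t] by (intro ennreal_leI) simp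
    then show ?thesis using False True by (simp add: add_increasing)
  qed
qed simp

lemma nn_integral_B_integrand_finite:
  assumes t: "t > 0"
  shows "(\<integral>\<^sup>+s. ennreal (B_integrand t s) * indicator {1<..} s \<partial>lborel) < \<infinity>"
proof -
  define K C where "K = (2*t+1)*(2+t)/t" and "C = 4*(1+t)^2/t"
  have "(\<integral>\<^sup>+s. ennreal (B_integrand t s) * indicator {1<..} s \<partial>lborel)
      \<le> (\<integral>\<^sup>+s. ennreal K * indicator {1..2} s + ennreal (4 * (s-1) powr (-1/2)) * indicator {1..2} s
        + ennreal (C * (1/s^2)) * indicator {2..} s \<partial>lborel)"
    unfolding K_def C_def by (intro nn_integral_mono B_integrand_le_majorant[OF t])
  also have "\<dots> = ennreal K * emeasure lborel {1..2::real}
      + (\<integral>\<^sup>+s. ennreal (4 * (s-1) powr (-1/2)) * indicator {1..2} s \<partial>lborel)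
      + (\<integral>\<^sup>+s. ennreal (C * (1/s^2)) * indicator {2..} s \<partial>lborel)"
    by (simp add: nn_integral_add nn_integral_cmult_indicator)
  also have "(\<integral>\<^sup>+s. ennreal (4 * (s-1) powr (-1/2)) * indicator {1..2} s \<partial>lborel)
      = (\<integral>\<^sup>+x. ennreal (4 * x powr (-1/2)) * indicator {0..1} x \<partial>lborel)"
    using nn_integral_real_affine[of "\<lambda>s. ennreal (4 * (s-1) powr (-1/2)) * indicator {1..2} s" 1 1]
    by (simp add: indicator_def add.commute)
  also have "\<dots> = ennreal (4 * (1 powr (-1/2+1) / (-1/2+1)))"
    by (intro nn_integral_has_integral_lebesgue' has_integral_mult_right has_integral_powr_from_0) auto
  also have "(\<integral>\<^sup>+s. ennreal (C * (1/s^2)) * indicator {2..} s \<partial>lborel)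
      = ennreal (C * (1 / (real (2 - 1) * 2 ^ (2 - 1))))"
    using t by (intro nn_integral_has_integral_lebesgue' has_integral_mult_right
        has_integral_inverse_power_to_inf) (auto simp: C_def)
  also have "ennreal K * emeasure lborel {1..2::real} + ennreal (4 * (1 powr (-1/2+1) / (-1/2+1)))
      + ennreal (C * (1 / (real (2 - 1) * 2 ^ (2 - 1)))) < \<infinity>"
    by simp
  finally show ?thesis .
qed

section \<open>The area of an ideal triangle\<close>

text \<open>Up to the factor \<open>1/|D|\<close>, the Hilbert area density on the ideal triangle (and 0 outside),
  as a function of the first two barycentric coordinates.\<close>

definition ideal_bary_density :: "real \<Rightarrow> real \<Rightarrow> real \<Rightarrow> real \<Rightarrow> real \<Rightarrow> real" where
  "ideal_bary_density a b c x0 x1 =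
    (if 0 < x0 \<and> 0 < x1 \<and> 0 < 1 - x0 - x1 \<and> 0 \<le> side0 a b c x0 x1 (1 - x0 - x1)
        \<and> 0 \<le> side1 a b c x0 x1 (1 - x0 - x1) \<and> 0 \<le> side2 a b c x0 x1 (1 - x0 - x1)
     then 1 / (x0 * x1 * (1 - x0 - x1)) else 0)"

lemma ideal_bary_density_nonneg: "0 \<le> ideal_bary_density a b c x0 x1"
  by (simp add: ideal_bary_density_def)

lemma borel_measurable_ideal_bary_density [measurable (raw)]:
  assumes [measurable]: "f \<in> borel_measurable M" "g \<in> borel_measurable M"
  shows "(\<lambda>x. ideal_bary_density a b c (f x) (g x)) \<in> borel_measurable M"
  unfolding ideal_bary_density_def side0_def side1_def side2_def by measurable

lemma sheared_sides_nonneg_iff: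
  assumes a: "a > 0" and b: "b > 0" and x0: "0 < x0" "x0 < 1"
  shows "0 \<le> side0 a b c x0 ((1-x0)*w) (1 - x0 - (1-x0)*w)
      \<and> 0 \<le> side2 a b c x0 ((1-x0)*w) (1 - x0 - (1-x0)*w)
      \<longleftrightarrow> ratio_lower a b c w \<le> x0/(1-x0)"
    and "0 \<le> side1 a b c x0 ((1-x0)*w) (1 - x0 - (1-x0)*w) \<longleftrightarrow> x0/(1-x0) \<le> ratio_upper a c w"
proof -
  define q where "q = x0/(1-x0)"
  have q: "(1-x0)*q = x0" "1-x0 > 0" using x0 by (simp_all add: q_def)
  define y0 y1 y2 where "y0 = side0 a b c x0 ((1-x0)*w) (1 - x0 - (1-x0)*w)"
    and "y1 = side1 a b c x0 ((1-x0)*w) (1 - x0 - (1-x0)*w)"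
    and "y2 = side2 a b c x0 ((1-x0)*w) (1 - x0 - (1-x0)*w)"
  have Y: "y0 = (1-x0)*q - (1-x0)*(c*(1-w) - b*c*w)"
    "y2 = (a*b)*((1-x0)*q) - (1-x0)*(b*w - (1-w))"
    "y1 = (1-x0)*(w + a*c*(1-w)) - a*((1-x0)*q)"
    unfolding y0_def y1_def y2_def side0_def side1_def side2_def q(1) by (simp_all add: algebra_simps)
  have K: "((1-x0)*(a*b)) * (q - (b*w - (1-w))/(a*b)) = (a*b)*((1-x0)*q) - (1-x0)*(b*w - (1-w))"
    "((1-x0)*a) * (ratio_upper a c w - q) = (1-x0)*(w + a*c*(1-w)) - a*((1-x0)*q)"
    using a b by (simp_all add: ratio_upper_def field_simps)
  have "y0 = (1-x0) * (q - (c*(1-w) - b*c*w))" using Y(1) by (simp add: algebra_simps)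
  moreover have "y2 = ((1-x0)*(a*b)) * (q - (b*w - (1-w))/(a*b))" by (simp only: Y(2) K(1))
  moreover have "y1 = ((1-x0)*a) * (ratio_upper a c w - q)" by (simp only: Y(3) K(2))
  moreover have nonneg_iff: "0 \<le> p * y \<longleftrightarrow> 0 \<le> y" if "0 < p" for p y :: real
    using that by (simp add: zero_le_mult_iff)
  moreover have "0 < 1-x0" "0 < (1-x0)*(a*b)" "0 < (1-x0)*a" using a b q(2) by simp_all
  ultimately show "0 \<le> side0 a b c x0 ((1-x0)*w) (1 - x0 - (1-x0)*w)
      \<and> 0 \<le> side2 a b c x0 ((1-x0)*w) (1 - x0 - (1-x0)*w)
      \<longleftrightarrow> ratio_lower a b c w \<le> x0/(1-x0)"
    and "0 \<le> side1 a b c x0 ((1-x0)*w) (1 - x0 - (1-x0)*w) \<longleftrightarrow> x0/(1-x0) \<le> ratio_upper a c w"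
    unfolding y0_def[symmetric] y1_def[symmetric] y2_def[symmetric]
    by (simp_all add: ratio_lower_def q_def)
qed

lemma divide_one_plus_le_iff:
  fixes x q :: real
  assumes "0 < x" "x < 1" "q > 0"
  shows "q/(1+q) \<le> x \<longleftrightarrow> q \<le> x/(1-x)"
    and "x \<le> q/(1+q) \<longleftrightarrow> x/(1-x) \<le> q"
  using assms by (simp_all add: field_simps)

lemma has_integral_inverse_x_one_minus_x:
  fixes L R :: real
  assumes "0 < L" "L \<le> R" "R < 1"
  shows "((\<lambda>x. 1/(x*(1-x))) has_integral ((ln R - ln (1-R)) - (ln L - ln (1-L)))) {L..R}"
proof (rule fundamental_theorem_of_calculus[OF assms(2)])
  fix x assume "x \<in> {L..R}"
  then have x: "0 < x" "x < 1" using assms by auto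
  then have "((\<lambda>x. ln x - ln (1-x)) has_real_derivative 1/x + 1/(1-x)) (at x)"
    by (auto intro!: derivative_eq_intros)
  moreover have "1/x + 1/(1-x) = 1/(x*(1-x))" using x by (simp add: field_simps)
  ultimately show "((\<lambda>x. ln x - ln (1-x)) has_vector_derivative 1/(x*(1-x))) (at x within {L..R})"
    by (simp add: has_real_derivative_iff_has_vector_derivative[symmetric] has_field_derivative_at_within)
qed

lemma sheared_ideal_bary_density_eq:
  assumes a: "a > 0" and b: "b > 0" and c: "c > 0" and w: "0 < w" "w < 1" "w \<noteq> 1/(1+b)"
  defines "L \<equiv> ratio_lower a b c w / (1 + ratio_lower a b c w)"
    and "R \<equiv> ratio_upper a c w / (1 + ratio_upper a c w)"
  shows "(1-x0) * ideal_bary_density a b c x0 ((1-x0)*w)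
      = indicator {L..R} x0 * (1/(w*(1-w)) * (1/(x0*(1-x0))))"
proof (cases "0 < x0 \<and> x0 < 1")
  case True
  have l: "0 < ratio_lower a b c w" and r: "0 < ratio_upper a c w"
    using ratio_lower_pos[OF a b c w] ratio_lower_le_upper[OF a b c w(1,2)] by simp_all
  have e: "1 - x0 - (1-x0)*w = (1-x0)*(1-w)" by (simp add: algebra_simps)
  then have pos: "(1-x0)*w > 0" "1 - x0 - (1-x0)*w > 0" using True w by simp_all
  have "(0 \<le> side0 a b c x0 ((1-x0)*w) (1 - x0 - (1-x0)*w)
        \<and> 0 \<le> side2 a b c x0 ((1-x0)*w) (1 - x0 - (1-x0)*w)) \<longleftrightarrow> L \<le> x0"
    "0 \<le> side1 a b c x0 ((1-x0)*w) (1 - x0 - (1-x0)*w) \<longleftrightarrow> x0 \<le> R"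
    using sheared_sides_nonneg_iff[OF a b, of x0 c w] divide_one_plus_le_iff[of x0] True l r
    by (simp_all add: L_def R_def)
  then have "ideal_bary_density a b c x0 ((1-x0)*w)
      = indicator {L..R} x0 * (1/(x0*((1-x0)*w)*(1 - x0 - (1-x0)*w)))"
    using True pos unfolding ideal_bary_density_def by (auto simp: indicator_def)
  moreover have "(1-x0) * (1/(x0*((1-x0)*w)*(1 - x0 - (1-x0)*w))) = 1/(w*(1-w)) * (1/(x0*(1-x0)))"
  proof -
    have "x0*((1-x0)*w)*((1-x0)*(1-w)) = (1-x0) * ((w*(1-w)) * (x0*(1-x0)))"
      by (simp add: algebra_simps)
    moreover have "1 - x0 \<noteq> 0" using True by simp
    ultimately show ?thesis unfolding e by simp
  qed
  ultimately show ?thesis by (metis mult.left_commute)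
next
  case False
  have "0 < L" "R < 1"
    using ratio_lower_pos[OF a b c w] ratio_lower_le_upper[OF a b c w(1,2)] by (simp_all add: L_def R_def)
  then show ?thesis using False by (auto simp: ideal_bary_density_def indicator_def)
qed

lemma nn_integral_sheared_ideal_bary_density:
  assumes a: "a > 0" and b: "b > 0" and c: "c > 0" and w: "0 < w" "w < 1" "w \<noteq> 1/(1+b)"
  shows "(\<integral>\<^sup>+x0. ennreal ((1-x0) * ideal_bary_density a b c x0 ((1-x0)*w)) \<partial>lborel)
      = ennreal (w_integrand a b c w)"
proof -
  define l r where "l = ratio_lower a b c w" and "r = ratio_upper a c w"
  have l: "0 < l" and lr: "l \<le> r"
    using ratio_lower_pos[OF a b c w] ratio_lower_le_upper[OF a b c w(1,2)] by (simp_all add: l_def r_def)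
  then have r: "0 < r" by simp
  define L R where "L = l/(1+l)" and "R = r/(1+r)"
  have LR: "0 < L" "L \<le> R" "R < 1"
    using l r lr frac_le_frac_iff[of 1 l r] by (simp_all add: L_def R_def add.commute)
  have "(\<integral>\<^sup>+x0. ennreal ((1-x0) * ideal_bary_density a b c x0 ((1-x0)*w)) \<partial>lborel)
      = (\<integral>\<^sup>+x0. ennreal (1/(w*(1-w)) * (1/(x0*(1-x0)))) * indicator {L..R} x0 \<partial>lborel)"
    using sheared_ideal_bary_density_eq[OF a b c w]
    by (intro nn_integral_cong) (simp add: indicator_def L_def R_def l_def r_def)
  also have "\<dots> = ennreal (1/(w*(1-w)) * ((ln R - ln (1-R)) - (ln L - ln (1-L))))"
    using LR w by (intro nn_integral_has_integral_lebesgue' has_integral_mult_right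
        has_integral_inverse_x_one_minus_x) auto
  also have "(ln R - ln (1-R)) - (ln L - ln (1-L)) = ln (r/l)"
    using l r LR by (simp add: L_def R_def ln_div field_simps)
  finally show ?thesis by (simp add: w_integrand_def l_def r_def)
qed

lemma ideal_bary_density_eq_0:
  assumes "\<not> (0 < x0 \<and> x0 < 1 \<and> 0 < w \<and> w < 1)"
  shows "ideal_bary_density a b c x0 ((1-x0)*w) = 0"
proof -
  have "1 - x0 - (1-x0)*w = (1-x0)*(1-w)" by (simp add: algebra_simps)
  then show ?thesis
    using assms by (auto simp: ideal_bary_density_def zero_less_mult_iff)
qed

lemma nn_integral_shear_ideal_bary_density:
  "(\<integral>\<^sup>+x1. ennreal (ideal_bary_density a b c x0 x1) \<partial>lborel)
     = (\<integral>\<^sup>+w. ennreal ((1-x0) * ideal_bary_density a b c x0 ((1-x0)*w)) \<partial>lborel)"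
proof (cases "0 < x0 \<and> x0 < 1")
  case True
  have "(\<integral>\<^sup>+x1. ennreal (ideal_bary_density a b c x0 x1) \<partial>lborel)
      = ennreal (1-x0) * (\<integral>\<^sup>+w. ennreal (ideal_bary_density a b c x0 (0 + (1-x0)*w)) \<partial>lborel)"
    using True by (subst nn_integral_real_affine[where c = "1-x0" and t = 0]) auto
  also have "\<dots> = (\<integral>\<^sup>+w. ennreal ((1-x0) * ideal_bary_density a b c x0 ((1-x0)*w)) \<partial>lborel)"
    using True by (subst nn_integral_cmult[symmetric]) (auto simp: ennreal_mult ideal_bary_density_nonneg)
  finally show ?thesis .
next
  case False
  then have "ideal_bary_density a b c x0 x1 = 0" for x1
    by (auto simp: ideal_bary_density_def)
  with ideal_bary_density_eq_0[of x0] False show ?thesis by simp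
qed

lemma nn_integral_ideal_bary_density:
  assumes a: "a > 0" and b: "b > 0" and c: "c > 0"
  shows "(\<integral>\<^sup>+x0. (\<integral>\<^sup>+x1. ennreal (ideal_bary_density a b c x0 x1) \<partial>lborel) \<partial>lborel)
       = (\<integral>\<^sup>+s. ennreal (B_integrand (a*b*c) s) * indicator {1<..} s \<partial>lborel)"
proof -
  have "(\<integral>\<^sup>+x0. (\<integral>\<^sup>+x1. ennreal (ideal_bary_density a b c x0 x1) \<partial>lborel) \<partial>lborel)
      = (\<integral>\<^sup>+w. (\<integral>\<^sup>+x0. ennreal ((1-x0) * ideal_bary_density a b c x0 ((1-x0)*w)) \<partial>lborel) \<partial>lborel)"
    unfolding nn_integral_shear_ideal_bary_density
    by (rule lborel_pair.Fubini') (simp add: split_beta')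
  also have "\<dots> = (\<integral>\<^sup>+w. ennreal (w_integrand a b c w) * indicator ({0<..<1} - {1/(1+b)}) w \<partial>lborel)"
  proof (rule nn_integral_cong_AE)
    show "AE w in lborel. (\<integral>\<^sup>+x0. ennreal ((1-x0) * ideal_bary_density a b c x0 ((1-x0)*w)) \<partial>lborel)
        = ennreal (w_integrand a b c w) * indicator ({0<..<1} - {1/(1+b)}) w"
      using AE_lborel_singleton[of "1/(1+b)"]
    proof eventually_elim
      case (elim w)
      then show ?case
        using nn_integral_sheared_ideal_bary_density[OF a b c, of w] ideal_bary_density_eq_0[of _ w]
        by (auto simp: indicator_def)
    qed
  qed
  also have "\<dots> = (\<integral>\<^sup>+s. ennreal (B_integrand (a*b*c) s) * indicator {1<..} s \<partial>lborel)"
    by (rule nn_integral_w_integrand[OF a b c])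
  finally show ?thesis .
qed

context triangle
begin

lemma area_density_restricted_ideal_tri:
  assumes "a > 0" "b > 0" "c > 0"
  shows "hilbert_area_density (open_tri P0 P1 P2) X * indicator (ideal_tri P0 P1 P2 a b c) X
    = ideal_bary_density a b c (bary0 X) (bary1 X) / \<bar>D\<bar>"
proof (cases "X \<in> ideal_tri P0 P1 P2 a b c")
  case True
  then have "X \<in> open_tri P0 P1 P2" by (simp add: ideal_tri_def)
  then show ?thesis
    using True ideal_tri_iff_bary[OF assms] hilbert_area_density_open_tri
    by (simp add: ideal_bary_density_def bary2_def field_simps)
next
  case False
  then show ?thesis
    using ideal_tri_iff_bary[OF assms] by (auto simp: ideal_bary_density_def bary2_def)
qed

lemma nn_integral_area_density_ideal_tri:
  assumes a: "a > 0" and b: "b > 0" and c: "c > 0"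
  shows "(\<integral>\<^sup>+X. ennreal (hilbert_area_density (open_tri P0 P1 P2) X)
      * indicator (ideal_tri P0 P1 P2 a b c) X \<partial>lborel)
    = (\<integral>\<^sup>+s. ennreal (B_integrand (a*b*c) s) * indicator {1<..} s \<partial>lborel)"
proof -
  have D: "\<bar>D\<bar> > 0" using det_nonzero by simp
  have "(\<integral>\<^sup>+X. ennreal (hilbert_area_density (open_tri P0 P1 P2) X)
      * indicator (ideal_tri P0 P1 P2 a b c) X \<partial>lborel)
      = (\<integral>\<^sup>+X. ennreal (ideal_bary_density a b c (bary0 X) (bary1 X) / \<bar>D\<bar>) \<partial>lborel)"
    by (intro nn_integral_cong)
      (simp add: area_density_restricted_ideal_tri[OF a b c, symmetric] indicator_def)
  also have "\<dots> = ennreal \<bar>D\<bar> * (\<integral>\<^sup>+x0. (\<integral>\<^sup>+x1.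
      ennreal (1/\<bar>D\<bar>) * ennreal (ideal_bary_density a b c x0 x1) \<partial>lborel) \<partial>lborel)"
    using D by (subst nn_integral_lborel_affine_basis[OF _ det_nonzero, where p = P2])
      (auto simp: bary_affine ennreal_mult[symmetric] ideal_bary_density_nonneg)
  also have "\<dots> = (\<integral>\<^sup>+x0. (\<integral>\<^sup>+x1. ennreal (ideal_bary_density a b c x0 x1) \<partial>lborel) \<partial>lborel)"
    using D by (simp add: nn_integral_cmult mult.assoc[symmetric] ennreal_mult[symmetric])
  finally show ?thesis unfolding nn_integral_ideal_bary_density[OF a b c] .
qed


lemma area_density_has_integral_ideal_tri:
  assumes abc: "a > 0" "b > 0" "c > 0"
    and r: "(\<integral>\<^sup>+s. ennreal (B_integrand (a*b*c) s) * indicator {1<..} s \<partial>lborel) = ennreal r" "0 \<le> r"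
  shows "(hilbert_area_density (open_tri P0 P1 P2) has_integral r) (ideal_tri P0 P1 P2 a b c)"
proof (rule has_integral_if_nn_integral_eq)
  show "(\<lambda>X. hilbert_area_density (open_tri P0 P1 P2) X * indicator (ideal_tri P0 P1 P2 a b c) X)
      \<in> borel_measurable borel"
    unfolding area_density_restricted_ideal_tri[OF abc] by measurable
  show "0 \<le> hilbert_area_density (open_tri P0 P1 P2) X" if "X \<in> ideal_tri P0 P1 P2 a b c" for X
    using area_density_restricted_ideal_tri[OF abc, of X] that ideal_bary_density_nonneg by simp
qed (use r nn_integral_area_density_ideal_tri[OF abc] in auto)
end

theorem lemma3p2:
  fixes P0 P1 P2 :: "real \<times> real" and a b c t :: real
  assumes "\<not> collinear {P0, P1, P2}"
    and "a > 0" and "b > 0" and "c > 0" and "t = a * b * c"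
  shows "B_integrand t integrable_on {1<..}
    \<and> (hilbert_area_density (open_tri P0 P1 P2) has_integral B t) (ideal_tri P0 P1 P2 a b c)"
proof -
  interpret triangle P0 P1 P2
    by standard (rule det2_nonzero_if_not_collinear[OF assms(1)])
  have t: "t > 0" using assms(2-5) by simp
  obtain r where r: "(\<integral>\<^sup>+s. ennreal (B_integrand t s) * indicator {1<..} s \<partial>lborel) = ennreal r" "0 \<le> r"
    using nn_integral_B_integrand_finite[OF t] by (cases rule: ennreal_cases) (auto simp: less_top)
  have B: "(B_integrand t has_integral r) {1<..}"
    using r B_integrand_nonneg[OF t] by (intro has_integral_if_nn_integral_eq) auto
  then have "B t = r" unfolding B_def by (rule integral_unique)
  moreover have "(hilbert_area_density (open_tri P0 P1 P2) has_integral r) (ideal_tri P0 P1 P2 a b c)"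
    using area_density_has_integral_ideal_tri[OF assms(2-4)] r assms(5) by blast
  ultimately show ?thesis using B by blast
qed

end
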